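(* Fix an integer $d\ge1$, $\alpha>0$, constants $M,\tilde M>0$ satisfying both $M/(2^{4\alpha+1}\tilde M)\ge1$ and $M/\tilde M\ge (1-5^{-\alpha})^{-1}\bigl(1+\frac{1}{5^\alpha-3^\alpha}\bigr)80^\alpha$, and a noise level $\sigma^2\ge0$. Let $\mathcal{C}_{\alpha,0}$ be the class of all CSO problems on $[0,1]^d$ satisfying conditions (A1)–(A3) below with $\beta=\alpha$ and these $M,\tilde M,\sigma$. Then for any admissible algorithm (as defined below) there exist constants $b_1,b_3>0$ and positive constants $b_5,b_6$ independent of $n$ and $\sigma^2$ such that for all $n\ge\max\{b_1\sigma^2,\,b_3\}$, $$\sup_{\mathcal{CSO}\in\mathcal{C}_{\alpha,0}}\mathbb{E}_{\mathcal{CSO}}\bigl[y(\mathbf{x}^* )-y(\hat{\mathbf{x}}_n^* )\bigr]\ \ge\ b_6\cdot\max\Bigl\{\bigl(\sigma^2/n\bigr)^{1/2},\ \exp(-b_5 n)\Bigr\},$$ where $\hat{\mathbf{x}}_n^*$ is the output of the algorithm run with budget $n$ and $\mathbf{x}^*$ the maximizer of the objective $y$.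
   Context: A CSO problem consists of an unknown objective $y:[0,1]^d\to\mathbb{R}$; an algorithm may query $\mathbf{x}\in[0,1]^d$ and observes $Y(\mathbf{x})=y(\mathbf{x})+\varepsilon(\mathbf{x})$. $\|\mathbf{x}\|_\infty=\max_l|x_l|$. Conditions: (A1) $y$ has a unique maximizer $\mathbf{x}^*$ over $[0,1]^d$; (A2) given $\mathbf{x}$, $\varepsilon(\mathbf{x})$ is independent of everything else and $\mathbb{E}[\exp(\lambda\varepsilon(\mathbf{x}))]\le\exp(\lambda^2\sigma^2/2)$ for all $\lambda\in\mathbb{R}$; (A3) $\tilde M\|\mathbf{x}^*-\mathbf{x}\|_\infty^\beta\le|y(\mathbf{x}^* )-y(\mathbf{x})|\le M\|\mathbf{x}^*-\mathbf{x}\|_\infty^\alpha$ for all $\mathbf{x}\in[0,1]^d$. An algorithm with budget $n$ is admissible if: (i) $\mathbf{x}_1$ is deterministic or a measurable function of a random vector $U_1$; (ii) for $t=1,\dots,n-1$, $\mathbf{x}_{t+1}$ is a measurable function of $\mathbf{x}_1,Y(\mathbf{x}_1),\dots,\mathbf{x}_t,Y(\mathbf{x}_t)$ and a random vector $U_{t+1}$; (iii) the output $\hat{\mathbf{x}}_n^*$ is a measurable function of $\mathbf{x}_1,Y(\mathbf{x}_1),\dots,\mathbf{x}_n,Y(\mathbf{x}_n)$ and a random vector $U_n^*$; (iv) $\hat{\mathbf{x}}_n^*\in\{\mathbf{x}_1,\dots,\mathbf{x}_n\}$; $U_1,\dots,U_n,U_n^*$ are independent random vectors, independent of the noise. An "algorithm"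 means such a rule specified for each budget $n$. $\mathbb{E}_{\mathcal{CSO}}$ is expectation under problem $\mathcal{CSO}$. *)

theory Defs
  imports "HOL-Probability.Probability"
begin

text \<open>Points of the search space [0,1]^d are vectors of type real^'d (d = CARD('d) \<ge> 1).\<close>

definition cso_cube :: "(real^'d) set" where
  "cso_cube = {x. \<forall>i. 0 \<le> x $ i \<and> x $ i \<le> 1}"

definition linf :: "real^'d \<Rightarrow> real" where
  "linf x = Max (range (\<lambda>i. \<bar>x $ i\<bar>))"

definition cso_opt :: "(real^'d \<Rightarrow> real) \<Rightarrow> real^'d" where
  "cso_opt y = (THE x. x \<in> cso_cube \<and> (\<forall>z\<in>cso_cube. y z \<le> y x))"

text \<open>A CSO problem is a pair (y, N): objective y and noise kernel N, where N x is the
  distribution of the noise eps(x) at query x (fresh independent draw at every query).\<close>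
definition cso_class :: "real \<Rightarrow> real \<Rightarrow> real \<Rightarrow> real \<Rightarrow>
    ((real^'d \<Rightarrow> real) \<times> (real^'d \<Rightarrow> real measure)) set" where
  "cso_class \<alpha> M Mt \<sigma> = {(y, N).
     y \<in> borel_measurable borel \<and>
     N \<in> borel \<rightarrow>\<^sub>M prob_algebra borel \<and>
     (\<exists>!x. x \<in> cso_cube \<and> (\<forall>z\<in>cso_cube. y z \<le> y x)) \<and>
     (\<forall>x\<in>cso_cube. \<forall>lam::real.
        (\<integral>\<^sup>+ e. ennreal (exp (lam * e)) \<partial>(N x)) \<le> ennreal (exp (lam\<^sup>2 * \<sigma>\<^sup>2 / 2))) \<and>
     (\<forall>x\<in>cso_cube.
        Mt * linf (cso_opt y - x) powr \<alpha> \<le> \<bar>y (cso_opt y) - y x\<bar> \<and>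
        \<bar>y (cso_opt y) - y x\<bar> \<le> M * linf (cso_opt y - x) powr \<alpha>)}"

text \<open>Histories: h i = (x_{i+1}, Y(x_{i+1})); only the first t entries matter after t steps.\<close>
definition hist_space :: "(nat \<Rightarrow> ((real^'d) \<times> real)) measure" where
  "hist_space = PiM UNIV (\<lambda>_. borel)"

text \<open>Distribution of the history after t queries, for objective y, noise kernel N and
  query kernels K t (the randomized rule choosing x_{t+1} from the history).\<close>
primrec cso_run :: "(real^'d \<Rightarrow> real) \<Rightarrow> (real^'d \<Rightarrow> real measure) \<Rightarrow>
    (nat \<Rightarrow> (nat \<Rightarrow> ((real^'d) \<times> real)) \<Rightarrow> (real^'d) measure) \<Rightarrow> nat \<Rightarrow>
    (nat \<Rightarrow> ((real^'d) \<times> real)) measure" where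
  "cso_run y N K 0 = return hist_space (\<lambda>_. (0, 0))"
| "cso_run y N K (Suc t) =
     cso_run y N K t \<bind> (\<lambda>h. K t h \<bind> (\<lambda>x. N x \<bind>
        (\<lambda>e. return hist_space (h(t := (x, y x + e))))))"

text \<open>Randomization via independent random vectors U_t is represented by Markov
  kernels (equivalent formulation).\<close>
definition admissible ::
  "(nat \<Rightarrow> nat \<Rightarrow> (nat \<Rightarrow> ((real^'d) \<times> real)) \<Rightarrow> (real^'d) measure) \<Rightarrow>
   (nat \<Rightarrow> (nat \<Rightarrow> ((real^'d) \<times> real)) \<Rightarrow> (real^'d) measure) \<Rightarrow> bool" where
  "admissible K Outp \<longleftrightarrow> (\<forall>n\<ge>1.
     (\<forall>t<n. K n t \<in> hist_space \<rightarrow>\<^sub>M prob_algebra borel \<and>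
            (\<forall>h h'. (\<forall>i<t. h i = h' i) \<longrightarrow> K n t h = K n t h') \<and>
            (\<forall>h. AE x in K n t h. x \<in> cso_cube)) \<and>
     Outp n \<in> hist_space \<rightarrow>\<^sub>M prob_algebra borel \<and>
     (\<forall>h h'. (\<forall>i<n. h i = h' i) \<longrightarrow> Outp n h = Outp n h') \<and>
     (\<forall>h. AE x in Outp n h. \<exists>i<n. x = fst (h i)))"

definition expected_regret ::
  "((real^'d \<Rightarrow> real) \<times> (real^'d \<Rightarrow> real measure)) \<Rightarrow>
   (nat \<Rightarrow> nat \<Rightarrow> (nat \<Rightarrow> ((real^'d) \<times> real)) \<Rightarrow> (real^'d) measure) \<Rightarrow>
   (nat \<Rightarrow> (nat \<Rightarrow> ((real^'d) \<times> real)) \<Rightarrow> (real^'d) measure) \<Rightarrow> nat \<Rightarrow> real" where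
  "expected_regret P K Outp n = (case P of (y, N) \<Rightarrow>
     \<integral>h. (\<integral>x. y (cso_opt y) - y x \<partial>(Outp n h)) \<partial>(cso_run y N (K n) n))"

end

theory Submission
  imports Defs
begin

(* Two instances whose maximizers are at sup-distance D cannot both be solved to accuracy
   of order D^alpha.  Noiseless: among the bumps at D = 2^-1, ..., 2^-2n the supports are
   disjoint, so some bump is met by none of the n queries with probability at least 1/2, and
   on that event the runs on y_base and on y_bump D coincide; this gives the exp(-b5 n) term
   with D >= 4^-n.  Noisy: with D^alpha of order sigma / sqrt n, two-point noise lets the
   observation laws of the two instances differ by a likelihood ratio whose second moment
   per query is 1 + O(1/n), hence at most 3 over n queries, and a chi-square form of Le Cam's
   method gives the (sigma^2 / n)^(1/2) term. *)

section \<open>Sup-norm geometry of the cube\<close>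

lemma abs_nth_le_linf: "\<bar>x $ i\<bar> \<le> linf x"
  unfolding linf_def by (rule Max_ge) auto

lemma linf_le_iff: "linf x \<le> c \<longleftrightarrow> (\<forall>i. \<bar>x $ i\<bar> \<le> c)"
  unfolding linf_def by (subst Max_le_iff) auto

lemma linf_nonneg: "0 \<le> linf x"
  using abs_nth_le_linf[of x] abs_ge_zero order_trans by blast

lemma linf_triangle: "linf (x + y) \<le> linf x + linf y"
  unfolding linf_le_iff using abs_nth_le_linf abs_triangle_ineq
  by (metis add_mono order_trans vector_add_component)

lemma linf_minus_commute: "linf (x - y) = linf (y - x)"
proof -
  have "linf (x - y) \<le> linf (y - x)" for x y :: "real^'d"
    unfolding linf_le_iff using abs_nth_le_linf by (metis abs_minus_commute vector_minus_component)
  then show ?thesis by (meson order_antisym)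
qed

lemma linf_vec: "linf (vec c :: real^'d) = \<bar>c\<bar>"
  using abs_nth_le_linf[of "vec c :: real^'d"] by (intro order_antisym) (auto simp: linf_le_iff)

lemma linf_diff_le_1:
  assumes "x \<in> cso_cube" "z \<in> cso_cube" shows "linf (x - z) \<le> 1"
  using assms unfolding linf_le_iff cso_cube_def by (simp add: abs_le_iff) (smt (verit))

lemma borel_measurable_linf [measurable]: "linf \<in> borel_measurable borel"
proof -
  have "(\<lambda>x::real^'d. Max ((\<lambda>i. \<bar>x $ i\<bar>) ` UNIV)) \<in> borel_measurable borel"
    by (intro borel_measurable_Max) auto
  then show ?thesis unfolding linf_def[abs_def] by simp
qed

lemma vec_in_cube: "0 \<le> c \<Longrightarrow> c \<le> 1 \<Longrightarrow> vec c \<in> cso_cube"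
  unfolding cso_cube_def by simp

lemma zero_in_cube: "0 \<in> cso_cube"
  unfolding cso_cube_def by simp

lemma sets_borel_cube [measurable]: "cso_cube \<in> sets borel"
proof -
  have "cso_cube = (\<Inter>i. (\<lambda>x::real^'d. x $ i) -` {0..1})"
    unfolding cso_cube_def by auto
  also have "closed \<dots>"
    by (intro closed_INT ballI closed_vimage_vec_nth) auto
  finally show ?thesis by (rule borel_closed)
qed

lemma cso_opt_eqI:
  assumes "c \<in> cso_cube" "\<And>z. z \<in> cso_cube \<Longrightarrow> z \<noteq> c \<Longrightarrow> y z < y c"
  shows "cso_opt y = c"
  unfolding cso_opt_def
  by (rule the_equality) (use assms in \<open>auto intro: ccontr simp: not_less[symmetric], force\<close>)

lemma cso_opt_in_cube:
  assumes "\<exists>!x. x \<in> cso_cube \<and> (\<forall>z\<in>cso_cube. y z \<le> y x)"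
  shows "cso_opt y \<in> cso_cube"
  using theI'[OF assms] unfolding cso_opt_def by auto

definition simple_regret :: "(real^'d \<Rightarrow> real) \<Rightarrow> real^'d \<Rightarrow> real" where
  "simple_regret y x = y (cso_opt y) - y x"

lemma cso_classI:
  assumes "y \<in> borel_measurable borel" "N \<in> borel \<rightarrow>\<^sub>M prob_algebra borel"
    and "\<exists>!x. x \<in> cso_cube \<and> (\<forall>z\<in>cso_cube. y z \<le> y x)"
    and "\<And>x lam. x \<in> cso_cube \<Longrightarrow>
      (\<integral>\<^sup>+e. ennreal (exp (lam * e)) \<partial>N x) \<le> ennreal (exp (lam\<^sup>2 * \<sigma>\<^sup>2 / 2))"
    and "0 \<le> Mt"
    and "\<And>x. x \<in> cso_cube \<Longrightarrow> Mt * linf (cso_opt y - x) powr \<alpha> \<le> simple_regret y x"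
    and "\<And>x. x \<in> cso_cube \<Longrightarrow> simple_regret y x \<le> M * linf (cso_opt y - x) powr \<alpha>"
  shows "(y, N) \<in> cso_class \<alpha> M Mt \<sigma>"
proof -
  have "0 \<le> simple_regret y x" if "x \<in> cso_cube" for x
    using assms(5) assms(6)[OF that] by (smt (verit) mult_nonneg_nonneg powr_ge_zero)
  then show ?thesis
    using assms unfolding cso_class_def simple_regret_def by auto
qed

(* Truncating at 1 changes nothing on the cube but keeps the instances below bounded
   on all of real^'d. *)

definition tdist :: "real^'d \<Rightarrow> real^'d \<Rightarrow> real" where
  "tdist x c = min 1 (linf (x - c))"

lemma borel_measurable_tdist [measurable]: "(\<lambda>x. tdist x c) \<in> borel_measurable borel"
  unfolding tdist_def by measurable

lemma tdist_nonneg: "0 \<le> tdist x c"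
  unfolding tdist_def using linf_nonneg by simp

lemma tdist_le_1: "tdist x c \<le> 1"
  unfolding tdist_def by simp

lemma tdist_commute: "tdist x c = tdist c x"
  unfolding tdist_def by (metis linf_minus_commute)

lemma tdist_self [simp]: "tdist x x = 0"
proof -
  have "linf (x - x) \<le> 0" by (simp add: linf_le_iff)
  then show ?thesis unfolding tdist_def using linf_nonneg[of "x - x"] by simp
qed

lemma tdist_triangle: "tdist x z \<le> tdist x c + tdist c z"
proof -
  have "linf (x - z) \<le> linf (x - c) + linf (c - z)"
    using linf_triangle[of "x - c" "c - z"] by simp
  then show ?thesis
    unfolding tdist_def using linf_nonneg[of "x - c"] linf_nonneg[of "c - z"] by linarith
qed

lemma tdist_pos: "x \<noteq> c \<Longrightarrow> 0 < tdist x c"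
proof -
  assume "x \<noteq> c"
  then obtain i where "x $ i \<noteq> c $ i" by (metis vec_eq_iff)
  then have "0 < linf (x - c)" using abs_nth_le_linf[of "x - c" i] by auto
  then show ?thesis unfolding tdist_def by simp
qed

lemma tdist_eq_linf: "x \<in> cso_cube \<Longrightarrow> z \<in> cso_cube \<Longrightarrow> tdist x z = linf (x - z)"
  unfolding tdist_def using linf_diff_le_1[of x z] by linarith

lemma tdist_vec_0:
  assumes "0 \<le> c" "c \<le> 1" shows "tdist (vec c) 0 = c" "tdist 0 (vec c) = c"
proof -
  show "tdist (vec c) 0 = c"
    unfolding tdist_def using assms by (simp add: linf_vec)
  then show "tdist 0 (vec c) = c" by (simp add: tdist_commute)
qed

lemma powr_le_2_powr_add:
  fixes u v w a :: real
  assumes "0 \<le> u" "0 \<le> v" "0 \<le> w" "w \<le> u + v" "0 \<le> a"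
  shows "w powr a \<le> 2 powr a * (u powr a + v powr a)"
proof -
  have "w powr a \<le> (2 * max u v) powr a"
    using assms by (intro powr_mono2) auto
  also have "\<dots> = 2 powr a * max u v powr a"
    using assms by (simp add: powr_mult)
  also have "max u v powr a \<le> u powr a + v powr a"
    by (simp add: max_def)
  finally show ?thesis by (simp add: mult_left_mono)
qed

section \<open>The hard instances\<close>

locale cso_instances =
  fixes \<alpha> Mt M :: real
  assumes alpha_pos: "0 < \<alpha>" and Mt_pos: "0 < Mt" and M_ge: "2 powr (4 * \<alpha> + 1) * Mt \<le> M"
begin

definition amp :: real where "amp = 2 powr \<alpha> * Mt"

definition y_base :: "real^'d \<Rightarrow> real" where
  "y_base x = - (amp * tdist x 0 powr \<alpha>)"

definition y_bump :: "real \<Rightarrow> real^'d \<Rightarrow> real" where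
  "y_bump D x = max (y_base x) (amp * D powr \<alpha> - M * tdist x (vec D) powr \<alpha>)"

lemma M_ge_16_powr: "2 * 16 powr \<alpha> * Mt \<le> M"
proof -
  have e1: "2 powr (4 * \<alpha> + 1) = 2 powr (4 * \<alpha>) * 2" by (simp add: powr_add)
  have e2: "(2::real) powr (4 * \<alpha>) = (2 powr 4) powr \<alpha>" using powr_powr[of 2 4 \<alpha>] by simp
  have e3: "(2::real) powr 4 = 16" using powr_realpow[of 2 4] by simp
  show ?thesis using M_ge unfolding e1 e2 e3 by simp
qed

lemma amp_pos: "0 < amp"
  unfolding amp_def using Mt_pos by simp

lemma Mt_le_amp: "Mt \<le> amp"
  unfolding amp_def using Mt_pos alpha_pos by (simp add: ge_one_powr_ge_zero)

lemma amp_le_M: "amp \<le> M"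
proof -
  have "2 powr \<alpha> \<le> 2 * 16 powr \<alpha>"
    using powr_mono2[of \<alpha> 2 16] alpha_pos powr_ge_zero[of 16 \<alpha>] by linarith
  then show ?thesis
    unfolding amp_def using M_ge_16_powr Mt_pos by (meson mult_right_mono order_trans less_imp_le)
qed

lemma M_pos: "0 < M"
  using amp_le_M amp_pos by simp

lemma borel_measurable_y_base [measurable]: "y_base \<in> borel_measurable borel"
  unfolding y_base_def[abs_def] by measurable

lemma borel_measurable_y_bump [measurable]: "y_bump D \<in> borel_measurable borel"
  unfolding y_bump_def[abs_def] by measurable

lemma y_base_le_0: "y_base x \<le> 0"
  unfolding y_base_def using amp_pos tdist_nonneg by simp

lemma y_base_ge: "- amp \<le> y_base x"
  unfolding y_base_def using powr_le1[of \<alpha> "tdist x 0"] alpha_pos amp_pos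
  by (simp add: tdist_nonneg tdist_le_1 mult_left_le)

lemma y_base_0 [simp]: "y_base 0 = 0"
  unfolding y_base_def by simp

lemma y_base_less_0: "x \<noteq> 0 \<Longrightarrow> y_base x < 0"
  unfolding y_base_def using tdist_pos[of x 0] amp_pos by simp

lemma cso_opt_y_base: "cso_opt y_base = 0"
  by (rule cso_opt_eqI) (auto simp: zero_in_cube y_base_less_0)

lemma simple_regret_y_base: "simple_regret y_base x = amp * tdist x 0 powr \<alpha>"
  unfolding simple_regret_def cso_opt_y_base y_base_def by simp

lemma simple_regret_y_base_nonneg: "0 \<le> simple_regret y_base x"
  unfolding simple_regret_y_base using amp_pos by simp

lemma simple_regret_y_base_le: "simple_regret y_base x \<le> amp"
  using y_base_ge[of x] unfolding simple_regret_def cso_opt_y_base by simp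

lemma y_base_unique_max:
  "\<exists>!x::real^'d. x \<in> cso_cube \<and> (\<forall>z\<in>(cso_cube::(real^'d) set). y_base z \<le> y_base x)"
proof (rule ex1I[of _ 0])
  fix x assume "x \<in> cso_cube \<and> (\<forall>z\<in>cso_cube. y_base z \<le> y_base x)"
  then show "x = 0" using zero_in_cube y_base_less_0[of x] by force
qed (use zero_in_cube y_base_le_0 in auto)

lemma y_base_in_class:
  assumes "N \<in> borel \<rightarrow>\<^sub>M prob_algebra borel"
    and "\<And>x lam. x \<in> cso_cube \<Longrightarrow>
      (\<integral>\<^sup>+e. ennreal (exp (lam * e)) \<partial>N x) \<le> ennreal (exp (lam\<^sup>2 * \<sigma>\<^sup>2 / 2))"
  shows "(y_base, N) \<in> cso_class \<alpha> M Mt \<sigma>"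
proof (rule cso_classI)
  fix x :: "real^'d" assume x: "x \<in> cso_cube"
  have "linf (cso_opt y_base - x) = tdist x 0"
    using tdist_eq_linf[OF x zero_in_cube] linf_minus_commute[of 0 x] by (simp add: cso_opt_y_base)
  then show "Mt * linf (cso_opt y_base - x) powr \<alpha> \<le> simple_regret y_base x"
    and "simple_regret y_base x \<le> M * linf (cso_opt y_base - x) powr \<alpha>"
    unfolding simple_regret_y_base using Mt_le_amp amp_le_M by (auto intro: mult_right_mono)
qed (use assms y_base_unique_max Mt_pos in auto)

context
  fixes D :: real assumes D: "0 < D" "D \<le> 1"
begin

lemma peak_height_pos: "0 < amp * D powr \<alpha>"
  using amp_pos D by (intro mult_pos_pos) auto

lemma y_bump_peak: "y_bump D (vec D :: real^'d) = amp * D powr \<alpha>"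
  unfolding y_bump_def using y_base_le_0[of "vec D :: real^'d"] peak_height_pos by (simp add: max_def)

lemma y_bump_less_peak: "x \<noteq> vec D \<Longrightarrow> y_bump D x < amp * D powr \<alpha>"
proof -
  assume "x \<noteq> vec D"
  then have "0 < M * tdist x (vec D) powr \<alpha>" using tdist_pos[of x "vec D"] M_pos by simp
  moreover have "y_base x < amp * D powr \<alpha>" using y_base_le_0[of x] peak_height_pos by simp
  ultimately show ?thesis unfolding y_bump_def by simp
qed

lemma cso_opt_y_bump: "cso_opt (y_bump D) = vec D"
  by (rule cso_opt_eqI) (use D in \<open>auto simp: vec_in_cube y_bump_peak y_bump_less_peak\<close>)

lemma y_bump_unique_max:
  "\<exists>!x::real^'d. x \<in> cso_cube \<and> (\<forall>z\<in>(cso_cube::(real^'d) set). y_bump D z \<le> y_bump D x)"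
proof -
  have le: "y_bump D z \<le> y_bump D (vec D :: real^'d)" for z :: "real^'d"
    using y_bump_less_peak[of z] by (cases "z = vec D") (auto simp: y_bump_peak)
  have eq: "x = vec D" if "y_bump D (vec D :: real^'d) \<le> y_bump D x" for x :: "real^'d"
    using that y_bump_less_peak[of x] by (force simp: y_bump_peak)
  show ?thesis
    using D le eq by (intro ex1I[of _ "vec D"]) (auto simp: vec_in_cube)
qed

lemma y_base_le_y_bump: "y_base x \<le> y_bump D x"
  unfolding y_bump_def by simp

lemma simple_regret_y_bump:
  "simple_regret (y_bump D) x
     = min (M * tdist x (vec D) powr \<alpha>) (amp * D powr \<alpha> + amp * tdist x 0 powr \<alpha>)"
  unfolding simple_regret_def cso_opt_y_bump y_bump_peak unfolding y_bump_def y_base_def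
  by (simp add: min_def max_def)

lemma simple_regret_y_bump_ge:
  fixes x :: "real^'d" shows "Mt * tdist x (vec D) powr \<alpha> \<le> simple_regret (y_bump D) x"
proof -
  have "tdist x (vec D) \<le> tdist x 0 + D"
    using tdist_triangle[of x "vec D" 0] D by (simp add: tdist_vec_0)
  then have "tdist x (vec D) powr \<alpha> \<le> 2 powr \<alpha> * (tdist x 0 powr \<alpha> + D powr \<alpha>)"
    using D alpha_pos tdist_nonneg[of x] by (intro powr_le_2_powr_add) auto
  then have "Mt * tdist x (vec D) powr \<alpha> \<le> Mt * (2 powr \<alpha> * (tdist x 0 powr \<alpha> + D powr \<alpha>))"
    using Mt_pos by (simp add: mult_left_mono)
  then have "Mt * tdist x (vec D) powr \<alpha> \<le> amp * D powr \<alpha> + amp * tdist x 0 powr \<alpha>"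
    unfolding amp_def by (simp add: algebra_simps)
  moreover have "Mt * tdist x (vec D) powr \<alpha> \<le> M * tdist x (vec D) powr \<alpha>"
    using Mt_le_amp amp_le_M by (intro mult_right_mono) auto
  ultimately show ?thesis unfolding simple_regret_y_bump by simp
qed

lemma simple_regret_y_bump_nonneg: "0 \<le> simple_regret (y_bump D) x"
proof -
  have "0 \<le> Mt * tdist x (vec D) powr \<alpha>" using Mt_pos by simp
  then show ?thesis using simple_regret_y_bump_ge[of x] by linarith
qed

lemma simple_regret_y_bump_le:
  fixes x :: "real^'d" shows "simple_regret (y_bump D) x \<le> 2 * amp"
proof -
  have "y_bump D (vec D :: real^'d) \<le> amp"
    unfolding y_bump_peak using powr_le1[of \<alpha> D] D alpha_pos amp_pos by (simp add: mult_left_le)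
  moreover have "- amp \<le> y_bump D x" using y_base_le_y_bump[of x] y_base_ge[of x] by linarith
  ultimately show ?thesis unfolding simple_regret_def cso_opt_y_bump by linarith
qed

lemma y_bump_in_class:
  assumes "N \<in> borel \<rightarrow>\<^sub>M prob_algebra borel"
    and "\<And>x lam. x \<in> cso_cube \<Longrightarrow>
      (\<integral>\<^sup>+e. ennreal (exp (lam * e)) \<partial>N x) \<le> ennreal (exp (lam\<^sup>2 * \<sigma>\<^sup>2 / 2))"
  shows "(y_bump D, N) \<in> cso_class \<alpha> M Mt \<sigma>"
proof (rule cso_classI)
  fix x :: "real^'d" assume x: "x \<in> cso_cube"
  have "linf (cso_opt (y_bump D) - x) = tdist x (vec D)"
    using tdist_eq_linf[OF x vec_in_cube[of D]] linf_minus_commute[of "vec D" x] D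
    by (simp add: cso_opt_y_bump)
  then show "Mt * linf (cso_opt (y_bump D) - x) powr \<alpha> \<le> simple_regret (y_bump D) x"
    and "simple_regret (y_bump D) x \<le> M * linf (cso_opt (y_bump D) - x) powr \<alpha>"
    using simple_regret_y_bump_ge[of x] by (auto simp: simple_regret_y_bump)
qed (use assms y_bump_unique_max Mt_pos in auto)

text \<open>The maximizers of \<open>y_base\<close> and \<open>y_bump D\<close> are at sup-distance \<open>D\<close>, so no reported
  point is good for both.\<close>

lemma regret_sum_ge:
  fixes x :: "real^'d"
  shows "Mt * D powr \<alpha> \<le> simple_regret y_base x + simple_regret (y_bump D) x"
proof (cases "D / 2 \<le> tdist x 0")
  case True
  have "Mt * D powr \<alpha> = amp * (D / 2) powr \<alpha>"
    unfolding amp_def using D by (simp add: powr_divide)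
  also have "\<dots> \<le> amp * tdist x 0 powr \<alpha>"
    using True D alpha_pos amp_pos by (intro mult_left_mono powr_mono2) auto
  finally show ?thesis
    using simple_regret_y_bump_nonneg[of x] unfolding simple_regret_y_base by simp
next
  case False
  then have "D / 2 \<le> tdist x (vec D)"
    using tdist_triangle[of 0 "vec D" x] D by (simp add: tdist_commute tdist_vec_0)
  then have "M * (D / 2) powr \<alpha> \<le> M * tdist x (vec D) powr \<alpha>"
    using D alpha_pos M_pos by (intro mult_left_mono powr_mono2) auto
  moreover have "Mt * D powr \<alpha> \<le> M * (D / 2) powr \<alpha>"
  proof -
    have "Mt * D powr \<alpha> = amp * (D / 2) powr \<alpha>"
      unfolding amp_def using D by (simp add: powr_divide)
    then show ?thesis using amp_le_M by (simp add: mult_right_mono)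
  qed
  moreover have "Mt * D powr \<alpha> \<le> amp * D powr \<alpha> + amp * tdist x 0 powr \<alpha>"
    using mult_right_mono[OF Mt_le_amp, of "D powr \<alpha>"] amp_pos by (simp add: add_increasing2)
  ultimately show ?thesis
    unfolding simple_regret_y_bump using simple_regret_y_base_nonneg[of x] by simp
qed

lemma y_bump_ne_imp_close:
  fixes x :: "real^'d"
  assumes "y_bump D x \<noteq> y_base x" shows "tdist x (vec D) < D / 4"
proof (rule ccontr)
  let ?b = "tdist x (vec D)"
  assume "\<not> ?b < D / 4"
  then have far: "D / 4 \<le> ?b" by simp
  have "tdist x 0 \<le> 5 * ?b"
    using tdist_triangle[of x 0 "vec D"] D far by (simp add: tdist_vec_0)
  then have "tdist x 0 powr \<alpha> \<le> (5 * ?b) powr \<alpha>" "D powr \<alpha> \<le> (5 * ?b) powr \<alpha>"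
    using far D tdist_nonneg[of x 0] alpha_pos by (auto intro!: powr_mono2)
  then have "amp * tdist x 0 powr \<alpha> \<le> amp * (5 * ?b) powr \<alpha>"
      "amp * D powr \<alpha> \<le> amp * (5 * ?b) powr \<alpha>"
    using amp_pos by (auto intro: mult_left_mono)
  then have "amp * D powr \<alpha> + amp * tdist x 0 powr \<alpha> \<le> 2 * amp * (5 * ?b) powr \<alpha>"
    by linarith
  also have "\<dots> = 2 * Mt * (2 powr \<alpha> * 5 powr \<alpha>) * ?b powr \<alpha>"
    unfolding amp_def using tdist_nonneg[of x "vec D"] by (simp add: powr_mult)
  also have "2 powr \<alpha> * 5 powr \<alpha> = (10::real) powr \<alpha>"
    by (simp flip: powr_mult)
  also have "2 * Mt * 10 powr \<alpha> * ?b powr \<alpha> \<le> 2 * Mt * 16 powr \<alpha> * ?b powr \<alpha>"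
    using Mt_pos alpha_pos by (intro mult_right_mono mult_left_mono powr_mono2) auto
  also have "\<dots> \<le> M * ?b powr \<alpha>"
    using M_ge_16_powr by (intro mult_right_mono) (auto simp: algebra_simps)
  finally show False
    using assms unfolding y_bump_def y_base_def by (simp add: max_def split: if_splits)
qed

lemma y_bump_minus_y_base_le:
  fixes x :: "real^'d"
  shows "y_bump D x - y_base x \<le> 2 * 4 powr \<alpha> * Mt * D powr \<alpha>"
proof (cases "y_bump D x = y_base x")
  case True
  then show ?thesis using Mt_pos by simp
next
  case False
  then have "tdist x 0 \<le> 2 * D"
    using y_bump_ne_imp_close[OF False] tdist_triangle[of x 0 "vec D"] D by (simp add: tdist_vec_0)
  then have "tdist x 0 powr \<alpha> \<le> (2 * D) powr \<alpha>"
    using tdist_nonneg[of x 0] alpha_pos by (intro powr_mono2) auto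
  also have "\<dots> = 2 powr \<alpha> * D powr \<alpha>"
    using D by (simp add: powr_mult)
  finally have "amp * tdist x 0 powr \<alpha> \<le> 2 powr \<alpha> * 2 powr \<alpha> * Mt * D powr \<alpha>"
    unfolding amp_def using Mt_pos by (simp add: algebra_simps mult_left_mono)
  moreover have "2 powr \<alpha> * 2 powr \<alpha> = (4::real) powr \<alpha>"
    by (simp flip: powr_mult)
  moreover have "amp * D powr \<alpha> \<le> 4 powr \<alpha> * Mt * D powr \<alpha>"
    unfolding amp_def using alpha_pos Mt_pos by (intro mult_right_mono) (auto intro: powr_mono2)
  moreover have "y_bump D x - y_base x \<le> amp * D powr \<alpha> + amp * tdist x 0 powr \<alpha>"
  proof -
    have "0 \<le> amp * tdist x 0 powr \<alpha>" "0 \<le> M * tdist x (vec D) powr \<alpha>"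
      using amp_pos M_pos by auto
    then show ?thesis unfolding y_bump_def y_base_def using peak_height_pos by (auto simp: max_def)
  qed
  ultimately show ?thesis by simp
qed

end

lemma bump_regions_disjoint:
  fixes x :: "real^'d"
  assumes "j < k" "y_bump ((1/2) ^ Suc j) x \<noteq> y_base x"
  shows "y_bump ((1/2) ^ Suc k) x = y_base x"
proof (rule ccontr)
  define Dj :: real where "Dj = (1/2) ^ Suc j"
  define Dk :: real where "Dk = (1/2) ^ Suc k"
  have "(1/2::real) ^ Suc m \<le> 1" for m
    by (rule power_le_one) auto
  then have Dj: "0 < Dj" "Dj \<le> 1" and Dk: "0 < Dk" "Dk \<le> 1"
    unfolding Dj_def Dk_def by auto
  assume "y_bump ((1/2) ^ Suc k) x \<noteq> y_base x"
  then have "tdist x (vec Dk) < Dk / 4" "tdist x (vec Dj) < Dj / 4"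
    using y_bump_ne_imp_close[OF Dk] y_bump_ne_imp_close[OF Dj] assms(2) unfolding Dj_def Dk_def by auto
  then have "tdist (vec Dj) (vec Dk :: real^'d) < Dj / 4 + Dk / 4"
    using tdist_triangle[of "vec Dj" "vec Dk" x] tdist_commute[of x "vec Dj"] by simp
  moreover have "Dk \<le> Dj / 2"
    unfolding Dj_def Dk_def using assms(1) power_decreasing[of "Suc (Suc j)" "Suc k" "1/2::real"] by simp
  moreover have "tdist (vec Dj) (vec Dk :: real^'d) = Dj - Dk"
    using Dj Dk \<open>Dk \<le> Dj / 2\<close> unfolding tdist_def by (simp add: linf_vec flip: vec_sub)
  ultimately show False using Dk by simp
qed

end

section \<open>Runs of an algorithm\<close>

type_synonym 'd hist = "nat \<Rightarrow> (real^'d) \<times> real"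

lemma space_hist_space [simp]: "space hist_space = UNIV"
  unfolding hist_space_def by (simp add: space_PiM)

lemma measurable_hist_nth [measurable]: "(\<lambda>h::('d::finite) hist. h i) \<in> hist_space \<rightarrow>\<^sub>M borel"
  unfolding hist_space_def by measurable

lemma measurable_query [measurable]: "(\<lambda>h::('d::finite) hist. fst (h i)) \<in> hist_space \<rightarrow>\<^sub>M borel"
  using measurable_hist_nth by (rule measurable_compose) (simp flip: borel_prod)

lemma measurable_hist_update [measurable]:
  fixes y :: "real^'d \<Rightarrow> real"
  assumes [measurable]: "y \<in> borel_measurable borel"
  shows "(\<lambda>((h::'d hist, x), e). h(t := (x, y x + e))) \<in> (hist_space \<Otimes>\<^sub>M borel) \<Otimes>\<^sub>M borel \<rightarrow>\<^sub>M hist_space"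
proof -
  have "(\<lambda>p::('d hist \<times> (real^'d)) \<times> real. (snd (fst p), y (snd (fst p)) + snd p))
      \<in> (hist_space \<Otimes>\<^sub>M borel) \<Otimes>\<^sub>M borel \<rightarrow>\<^sub>M borel"
    unfolding borel_prod[symmetric] by measurable
  then have "(\<lambda>p::('d hist \<times> (real^'d)) \<times> real. (fst (fst p))(t := (snd (fst p), y (snd (fst p)) + snd p)))
      \<in> (hist_space \<Otimes>\<^sub>M borel) \<Otimes>\<^sub>M borel \<rightarrow>\<^sub>M PiM UNIV (\<lambda>_. borel)"
    by (intro measurable_fun_upd[where J=UNIV]) (auto simp: hist_space_def)
  then show ?thesis unfolding hist_space_def by (simp add: case_prod_beta')
qed

definition cso_step ::
  "(real^'d \<Rightarrow> real) \<Rightarrow> (real^'d \<Rightarrow> real measure) \<Rightarrow> ('d hist \<Rightarrow> (real^'d) measure) \<Rightarrow> nat \<Rightarrow>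
    'd hist \<Rightarrow> 'd hist measure" where
  "cso_step y N Kt t h = Kt h \<bind> (\<lambda>x. N x \<bind> (\<lambda>e. return hist_space (h(t := (x, y x + e)))))"

lemma cso_run_Suc: "cso_run y N K (Suc t) = cso_run y N K t \<bind> cso_step y N (K t) t"
  by (simp add: cso_step_def[abs_def])

context
  fixes y :: "real^'d \<Rightarrow> real" and N :: "real^'d \<Rightarrow> real measure"
  assumes y [measurable]: "y \<in> borel_measurable borel"
    and N [measurable]: "N \<in> borel \<rightarrow>\<^sub>M prob_algebra borel"
begin

lemma measurable_observation:
  "(\<lambda>(h::'d hist, x). N x \<bind> (\<lambda>e. return hist_space (h(t := (x, y x + e)))))
     \<in> hist_space \<Otimes>\<^sub>M borel \<rightarrow>\<^sub>M prob_algebra hist_space"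
proof -
  have "(\<lambda>(p, e). return hist_space ((\<lambda>((h::'d hist, x), e). h(t := (x, y x + e))) (p, e)))
      \<in> (hist_space \<Otimes>\<^sub>M borel) \<Otimes>\<^sub>M borel \<rightarrow>\<^sub>M prob_algebra hist_space"
    using measurable_compose[OF measurable_hist_update[OF y] measurable_return_prob_space]
    by (simp add: case_prod_beta')
  then have "(\<lambda>p. N (snd p) \<bind> (\<lambda>e. return hist_space ((\<lambda>((h::'d hist, x), e). h(t := (x, y x + e))) (p, e))))
      \<in> hist_space \<Otimes>\<^sub>M borel \<rightarrow>\<^sub>M prob_algebra hist_space"
    by (rule measurable_bind_prob_space2[rotated]) measurable
  then show ?thesis by (simp add: case_prod_beta')
qed

lemma measurable_observation_at:
  "(\<lambda>x. N x \<bind> (\<lambda>e. return hist_space (h(t := (x, y x + e))))) \<in> borel \<rightarrow>\<^sub>M prob_algebra hist_space"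
  using measurable_compose[OF measurable_Pair[OF measurable_const[of h] measurable_ident] measurable_observation]
  by (simp add: space_pair_measure)

lemma nn_integral_observation:
  assumes f [measurable]: "f \<in> borel_measurable hist_space"
  shows "(\<integral>\<^sup>+h'. f h' \<partial>(N x \<bind> (\<lambda>e. return hist_space (h(t := (x, y x + e))))))
    = (\<integral>\<^sup>+e. f (h(t := (x, y x + e))) \<partial>N x)"
proof -
  have "(\<lambda>e. h(t := (x, y x + e))) \<in> borel \<rightarrow>\<^sub>M hist_space"
    using measurable_compose[OF measurable_Pair[OF measurable_const[of "(h, x)"] measurable_ident]
        measurable_hist_update[OF y, of t]]
    by (simp add: case_prod_beta' space_pair_measure)
  then have "(\<lambda>e. return hist_space (h(t := (x, y x + e)))) \<in> N x \<rightarrow>\<^sub>M subprob_algebra hist_space"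
    using measurable_space[OF N, of x]
    by (simp add: space_prob_algebra cong: measurable_cong_sets)
  then show ?thesis
    by (simp add: nn_integral_bind[OF f] nn_integral_return)
qed

lemma measurable_nn_integral_observation:
  assumes "f \<in> borel_measurable hist_space"
  shows "(\<lambda>x. \<integral>\<^sup>+e. f (h(t := (x, y x + e))) \<partial>N x) \<in> borel_measurable borel"
  using measurable_compose[OF measurable_prob_algebraD[OF measurable_observation_at]
      nn_integral_measurable_subprob_algebra[OF assms]]
  by (simp add: nn_integral_observation[OF assms])

context
  fixes Kt :: "'d hist \<Rightarrow> (real^'d) measure"
  assumes Kt [measurable]: "Kt \<in> hist_space \<rightarrow>\<^sub>M prob_algebra borel"
begin

lemma measurable_cso_step: "cso_step y N Kt t \<in> hist_space \<rightarrow>\<^sub>M prob_algebra hist_space"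
  unfolding cso_step_def[abs_def] by (rule measurable_bind_prob_space2[OF Kt measurable_observation])

lemma nn_integral_cso_step:
  assumes f [measurable]: "f \<in> borel_measurable hist_space"
  shows "(\<integral>\<^sup>+h'. f h' \<partial>cso_step y N Kt t h) = (\<integral>\<^sup>+x. \<integral>\<^sup>+e. f (h(t := (x, y x + e))) \<partial>N x \<partial>Kt h)"
proof -
  have "(\<lambda>x. N x \<bind> (\<lambda>e. return hist_space (h(t := (x, y x + e))))) \<in> Kt h \<rightarrow>\<^sub>M subprob_algebra hist_space"
    using measurable_space[OF Kt, of h] measurable_prob_algebraD[OF measurable_observation_at]
    by (simp add: space_prob_algebra cong: measurable_cong_sets)
  then show ?thesis
    unfolding cso_step_def by (simp add: nn_integral_bind[OF f] nn_integral_observation)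
qed

lemma measurable_nn_integral_cso_step [measurable]:
  assumes "f \<in> borel_measurable hist_space"
  shows "(\<lambda>h. \<integral>\<^sup>+h'. f h' \<partial>cso_step y N Kt t h) \<in> borel_measurable hist_space"
  by (rule measurable_compose[OF measurable_prob_algebraD[OF measurable_cso_step]
        nn_integral_measurable_subprob_algebra[OF assms]])

lemma AE_cso_stepI:
  assumes [measurable]: "Measurable.pred hist_space P"
    and "AE x in Kt h. \<forall>e. P (h(t := (x, y x + e)))"
  shows "AE h' in cso_step y N Kt t h. P h'"
proof -
  have "{h' \<in> space hist_space. \<not> P h'} \<in> sets hist_space" by measurable
  then have not_P: "{h'. \<not> P h'} \<in> sets hist_space" by simp
  then have "emeasure (cso_step y N Kt t h) {h' \<in> space (cso_step y N Kt t h). \<not> P h'}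
      = (\<integral>\<^sup>+h'. indicator {h'. \<not> P h'} h' \<partial>cso_step y N Kt t h)"
    using measurable_space[OF measurable_cso_step, of h]
    by (subst nn_integral_indicator) (auto simp: space_prob_algebra cong: sets_eq_imp_space_eq)
  also have "\<dots> = (\<integral>\<^sup>+x. \<integral>\<^sup>+e. indicator {h'. \<not> P h'} (h(t := (x, y x + e))) \<partial>N x \<partial>Kt h)"
    by (rule nn_integral_cso_step) measurable
  also have "\<dots> = (\<integral>\<^sup>+x. 0 \<partial>Kt h)"
    using assms(2) by (intro nn_integral_cong_AE) (auto elim!: eventually_mono)
  finally show ?thesis
    by (subst AE_iff_measurable[OF _ refl]) (use not_P measurable_space[OF measurable_cso_step, of h] in
      \<open>auto simp: space_prob_algebra pred_def cong: sets_eq_imp_space_eq\<close>)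
qed

end

end

definition avoiding :: "(real^'d) set \<Rightarrow> nat \<Rightarrow> 'd hist set" where
  "avoiding S t = {h. \<forall>i<t. fst (h i) \<notin> S}"

lemma sets_avoiding [measurable]:
  assumes [measurable]: "S \<in> sets borel" shows "avoiding S t \<in> sets hist_space"
proof -
  have "avoiding S t = {h \<in> space hist_space. \<forall>i\<in>{..<t}. fst (h i) \<notin> S}"
    unfolding avoiding_def by auto
  also have "\<dots> \<in> sets hist_space" by measurable
  finally show ?thesis .
qed

definition likelihood :: "((real^'d) \<times> real \<Rightarrow> ennreal) \<Rightarrow> nat \<Rightarrow> 'd hist \<Rightarrow> ennreal" where
  "likelihood l t h = (\<Prod>i<t. l (h i))"

lemma measurable_likelihood [measurable]:
  assumes [measurable]: "l \<in> borel_measurable borel"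
  shows "likelihood l t \<in> borel_measurable hist_space"
  unfolding likelihood_def[abs_def] by measurable

lemma likelihood_update: "likelihood l (Suc t) (h(t := v)) = likelihood l t h * l v"
proof -
  have "(\<Prod>i<t. l ((h(t := v)) i)) = (\<Prod>i<t. l (h i))" by (rule prod.cong) auto
  then show ?thesis unfolding likelihood_def by simp
qed

context
  fixes y0 y1 :: "real^'d \<Rightarrow> real" and Kt :: "'d hist \<Rightarrow> (real^'d) measure"
  assumes y0 [measurable]: "y0 \<in> borel_measurable borel" and y1 [measurable]: "y1 \<in> borel_measurable borel"
    and Kt [measurable]: "Kt \<in> hist_space \<rightarrow>\<^sub>M prob_algebra borel"
begin

lemma nn_integral_cso_step_avoiding:
  assumes N [measurable]: "N \<in> borel \<rightarrow>\<^sub>M prob_algebra borel"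
    and [measurable]: "S \<in> sets borel" and eq: "\<And>x. x \<notin> S \<Longrightarrow> y0 x = y1 x"
    and [measurable]: "f \<in> borel_measurable hist_space"
  shows "(\<integral>\<^sup>+h'. indicator (avoiding S (Suc t)) h' * f h' \<partial>cso_step y1 N Kt t h)
    = indicator (avoiding S t) h * (\<integral>\<^sup>+h'. indicator (avoiding S (Suc t)) h' * f h' \<partial>cso_step y0 N Kt t h)"
proof (cases "h \<in> avoiding S t")
  case True
  have "indicator (avoiding S (Suc t)) (h(t := (x, y1 x + e))) * f (h(t := (x, y1 x + e)))
      = indicator (avoiding S (Suc t)) (h(t := (x, y0 x + e))) * f (h(t := (x, y0 x + e)))" for x e
    using eq[of x] by (cases "x \<in> S") (auto simp: avoiding_def indicator_def less_Suc_eq)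
  then show ?thesis
    using True by (simp add: nn_integral_cso_step[OF y1 N Kt] nn_integral_cso_step[OF y0 N Kt])
next
  case False
  then have "indicator (avoiding S (Suc t)) (h(t := v)) = (0::ennreal)" for v
    by (auto simp: avoiding_def indicator_def less_Suc_eq)
  then show ?thesis
    using False by (simp add: nn_integral_cso_step[OF y1 N Kt])
qed

lemma nn_integral_cso_step_likelihood:
  assumes N0 [measurable]: "N0 \<in> borel \<rightarrow>\<^sub>M prob_algebra borel"
    and N1 [measurable]: "N1 \<in> borel \<rightarrow>\<^sub>M prob_algebra borel"
    and l [measurable]: "l \<in> borel_measurable borel"
    and change: "\<And>x g. g \<in> borel_measurable borel \<Longrightarrow>
        (\<integral>\<^sup>+e. g (y0 x + e) \<partial>N0 x) = (\<integral>\<^sup>+e. l (x, y1 x + e) * g (y1 x + e) \<partial>N1 x)"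
    and f [measurable]: "f \<in> borel_measurable hist_space"
  shows "(\<integral>\<^sup>+h'. likelihood l (Suc t) h' * f h' \<partial>cso_step y1 N1 Kt t h)
    = likelihood l t h * (\<integral>\<^sup>+h'. f h' \<partial>cso_step y0 N0 Kt t h)"
proof -
  have sets_N1: "sets (N1 x) = sets borel" for x
    using measurable_space[OF N1, of x] by (simp add: space_prob_algebra)
  have sets_Kt: "sets (Kt h) = sets borel"
    using measurable_space[OF Kt, of h] by (simp add: space_prob_algebra)
  have upd [measurable]: "(\<lambda>v. h(t := (x, v))) \<in> borel \<rightarrow>\<^sub>M hist_space" for x
  proof -
    have "(\<lambda>v::real. (x, v)) \<in> borel \<rightarrow>\<^sub>M (borel :: ((real^'d) \<times> real) measure)"
      unfolding borel_prod[symmetric] by measurable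
    then show ?thesis unfolding hist_space_def
      by (intro measurable_fun_upd[where J=UNIV]) (auto simp: space_PiM)
  qed
  have "(\<integral>\<^sup>+e. likelihood l (Suc t) (h(t := (x, y1 x + e))) * f (h(t := (x, y1 x + e))) \<partial>N1 x)
      = likelihood l t h * (\<integral>\<^sup>+e. f (h(t := (x, y0 x + e))) \<partial>N0 x)" for x
  proof -
    have "(\<lambda>e. l (x, y1 x + e) * f (h(t := (x, y1 x + e)))) \<in> borel_measurable (N1 x)"
      unfolding measurable_cong_sets[OF sets_N1 refl] by measurable
    then have "(\<integral>\<^sup>+e. likelihood l (Suc t) (h(t := (x, y1 x + e))) * f (h(t := (x, y1 x + e))) \<partial>N1 x)
        = likelihood l t h * (\<integral>\<^sup>+e. l (x, y1 x + e) * f (h(t := (x, y1 x + e))) \<partial>N1 x)"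
      unfolding likelihood_update by (subst nn_integral_cmult[symmetric]) (simp_all add: ac_simps)
    also have "\<dots> = likelihood l t h * (\<integral>\<^sup>+e. f (h(t := (x, y0 x + e))) \<partial>N0 x)"
      using change[of "\<lambda>v. f (h(t := (x, v)))" x] by simp
    finally show ?thesis .
  qed
  moreover have "(\<lambda>x. \<integral>\<^sup>+e. f (h(t := (x, y0 x + e))) \<partial>N0 x) \<in> borel_measurable (Kt h)"
    unfolding measurable_cong_sets[OF sets_Kt refl] by (rule measurable_nn_integral_observation[OF y0 N0 f])
  ultimately show ?thesis
    by (simp add: nn_integral_cso_step[OF y1 N1 Kt] nn_integral_cso_step[OF y0 N0 Kt] nn_integral_cmult)
qed

lemma nn_integral_cso_step_likelihood_square:
  assumes N1 [measurable]: "N1 \<in> borel \<rightarrow>\<^sub>M prob_algebra borel"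
    and l [measurable]: "l \<in> borel_measurable borel"
    and second_moment: "\<And>x. (\<integral>\<^sup>+e. (l (x, y1 x + e))\<^sup>2 \<partial>N1 x) \<le> c"
  shows "(\<integral>\<^sup>+h'. (likelihood l (Suc t) h')\<^sup>2 \<partial>cso_step y1 N1 Kt t h) \<le> (likelihood l t h)\<^sup>2 * c"
proof -
  have "(\<integral>\<^sup>+e. (likelihood l (Suc t) (h(t := (x, y1 x + e))))\<^sup>2 \<partial>N1 x)
      = (likelihood l t h)\<^sup>2 * (\<integral>\<^sup>+e. (l (x, y1 x + e))\<^sup>2 \<partial>N1 x)" for x
  proof -
    have "sets (N1 x) = sets borel"
      using measurable_space[OF N1, of x] by (simp add: space_prob_algebra)
    then have "(\<lambda>e. (l (x, y1 x + e))\<^sup>2) \<in> borel_measurable (N1 x)"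
      by (simp cong: measurable_cong_sets)
    then show ?thesis
      unfolding likelihood_update power_mult_distrib by (rule nn_integral_cmult)
  qed
  then have "(\<integral>\<^sup>+h'. (likelihood l (Suc t) h')\<^sup>2 \<partial>cso_step y1 N1 Kt t h)
      = (\<integral>\<^sup>+x. (likelihood l t h)\<^sup>2 * (\<integral>\<^sup>+e. (l (x, y1 x + e))\<^sup>2 \<partial>N1 x) \<partial>Kt h)"
    by (simp add: nn_integral_cso_step[OF y1 N1 Kt])
  also have "\<dots> \<le> (\<integral>\<^sup>+x. (likelihood l t h)\<^sup>2 * c \<partial>Kt h)"
    by (intro nn_integral_mono mult_left_mono second_moment) auto
  also have "\<dots> = (likelihood l t h)\<^sup>2 * c"
    using measurable_space[OF Kt, of h] by (simp add: space_prob_algebra prob_space.emeasure_space_1)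
  finally show ?thesis .
qed

end

locale query_kernels =
  fixes n :: nat and K :: "nat \<Rightarrow> 'd hist \<Rightarrow> (real^'d) measure"
  assumes query_kernel [measurable]: "\<And>t. t < n \<Longrightarrow> K t \<in> hist_space \<rightarrow>\<^sub>M prob_algebra borel"
begin

context
  fixes y :: "real^'d \<Rightarrow> real" and N :: "real^'d \<Rightarrow> real measure"
  assumes y [measurable]: "y \<in> borel_measurable borel"
    and N [measurable]: "N \<in> borel \<rightarrow>\<^sub>M prob_algebra borel"
begin

lemma cso_run_in_prob_algebra: "t \<le> n \<Longrightarrow> cso_run y N K t \<in> space (prob_algebra hist_space)"
proof (induction t)
  case 0
  then show ?case
    using measurable_space[OF measurable_return_prob_space[of hist_space]] by simp
next
  case (Suc t)
  then have "cso_run y N K t \<in> space (prob_algebra hist_space)" and "t < n" by auto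
  from measurable_space[OF measurable_bind_prob_space[OF measurable_const[OF this(1), of "count_space UNIV"]
        measurable_cso_step[OF y N query_kernel[OF this(2)]]], of undefined]
  show ?case unfolding cso_run_Suc by simp
qed

lemma sets_cso_run: "t \<le> n \<Longrightarrow> sets (cso_run y N K t) = sets hist_space"
  using cso_run_in_prob_algebra by (simp add: space_prob_algebra)

lemma prob_space_cso_run: "t \<le> n \<Longrightarrow> prob_space (cso_run y N K t)"
  using cso_run_in_prob_algebra by (simp add: space_prob_algebra)

lemma measurable_cso_step_run:
  "t < n \<Longrightarrow> cso_step y N (K t) t \<in> cso_run y N K t \<rightarrow>\<^sub>M subprob_algebra hist_space"
  using measurable_prob_algebraD[OF measurable_cso_step[OF y N query_kernel]] sets_cso_run
  by (simp cong: measurable_cong_sets)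

lemma nn_integral_cso_run_Suc:
  assumes "t < n" and f [measurable]: "f \<in> borel_measurable hist_space"
  shows "(\<integral>\<^sup>+h'. f h' \<partial>cso_run y N K (Suc t))
    = (\<integral>\<^sup>+h. \<integral>\<^sup>+h'. f h' \<partial>cso_step y N (K t) t h \<partial>cso_run y N K t)"
  unfolding cso_run_Suc by (rule nn_integral_bind[OF f measurable_cso_step_run[OF \<open>t < n\<close>]])

lemma AE_cso_run_queries_in_cube:
  assumes "\<And>t h. t < n \<Longrightarrow> AE x in K t h. x \<in> cso_cube"
  shows "t \<le> n \<Longrightarrow> AE h in cso_run y N K t. \<forall>i<t. fst (h i) \<in> cso_cube"
proof (induction t)
  case (Suc t)
  have [measurable]: "Measurable.pred hist_space (\<lambda>h::'d hist. \<forall>i\<in>{..<Suc t}. fst (h i) \<in> cso_cube)"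
    by measurable
  have "cso_step y N (K t) t \<in> cso_run y N K t \<rightarrow>\<^sub>M subprob_algebra hist_space"
    using Suc.prems by (intro measurable_cso_step_run) simp
  moreover have "AE h in cso_run y N K t. AE h' in cso_step y N (K t) t h. \<forall>i\<in>{..<Suc t}. fst (h' i) \<in> cso_cube"
    using Suc by (auto elim!: eventually_mono intro!: AE_cso_stepI[OF y N query_kernel]
        assms[THEN eventually_mono] simp: less_Suc_eq)
  ultimately show ?case
    unfolding cso_run_Suc by (subst AE_bind) auto
qed simp

end

lemma nn_integral_cso_run_avoiding:
  fixes y0 y1 :: "real^'d \<Rightarrow> real" and S :: "(real^'d) set"
  assumes y0 [measurable]: "y0 \<in> borel_measurable borel" and y1 [measurable]: "y1 \<in> borel_measurable borel"
    and N [measurable]: "N \<in> borel \<rightarrow>\<^sub>M prob_algebra borel"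
    and S [measurable]: "S \<in> sets borel" and eq: "\<And>x. x \<notin> S \<Longrightarrow> y0 x = y1 x"
  shows "t \<le> n \<Longrightarrow> f \<in> borel_measurable hist_space \<Longrightarrow>
    (\<integral>\<^sup>+h. indicator (avoiding S t) h * f h \<partial>cso_run y1 N K t)
      = (\<integral>\<^sup>+h. indicator (avoiding S t) h * f h \<partial>cso_run y0 N K t)"
proof (induction t arbitrary: f)
  case (Suc t)
  note [measurable] = \<open>f \<in> borel_measurable hist_space\<close>
  define F where "F y h = (\<integral>\<^sup>+h'. indicator (avoiding S (Suc t)) h' * f h' \<partial>cso_step y N (K t) t h)" for y h
  have [measurable]: "F y0 \<in> borel_measurable hist_space"
    unfolding F_def[abs_def] using Suc.prems
    by (intro measurable_nn_integral_cso_step[OF y0 N query_kernel]) auto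
  have "(\<integral>\<^sup>+h. indicator (avoiding S (Suc t)) h * f h \<partial>cso_run y1 N K (Suc t))
      = (\<integral>\<^sup>+h. F y1 h \<partial>cso_run y1 N K t)"
    unfolding F_def using Suc.prems by (intro nn_integral_cso_run_Suc) auto
  also have "\<dots> = (\<integral>\<^sup>+h. indicator (avoiding S t) h * F y0 h \<partial>cso_run y1 N K t)"
    unfolding F_def using Suc.prems
    by (simp add: nn_integral_cso_step_avoiding[OF y0 y1 query_kernel N S eq])
  also have "\<dots> = (\<integral>\<^sup>+h. indicator (avoiding S t) h * F y0 h \<partial>cso_run y0 N K t)"
    using Suc by simp
  also have "\<dots> = (\<integral>\<^sup>+h. F y0 h \<partial>cso_run y0 N K t)"
    unfolding F_def using Suc.prems
    by (simp add: nn_integral_cso_step_avoiding[OF y0 y0 query_kernel N S, symmetric])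
  also have "\<dots> = (\<integral>\<^sup>+h. indicator (avoiding S (Suc t)) h * f h \<partial>cso_run y0 N K (Suc t))"
    unfolding F_def using Suc.prems by (intro nn_integral_cso_run_Suc[symmetric]) auto
  finally show ?case .
qed simp

end

context query_kernels
begin

context
  fixes y0 y1 :: "real^'d \<Rightarrow> real" and N0 N1 :: "real^'d \<Rightarrow> real measure"
    and l :: "(real^'d) \<times> real \<Rightarrow> ennreal"
  assumes y0 [measurable]: "y0 \<in> borel_measurable borel" and y1 [measurable]: "y1 \<in> borel_measurable borel"
    and N0 [measurable]: "N0 \<in> borel \<rightarrow>\<^sub>M prob_algebra borel"
    and N1 [measurable]: "N1 \<in> borel \<rightarrow>\<^sub>M prob_algebra borel"
    and l [measurable]: "l \<in> borel_measurable borel"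
begin

lemma nn_integral_cso_run_likelihood:
  assumes change: "\<And>x g. g \<in> borel_measurable borel \<Longrightarrow>
      (\<integral>\<^sup>+e. g (y0 x + e) \<partial>N0 x) = (\<integral>\<^sup>+e. l (x, y1 x + e) * g (y1 x + e) \<partial>N1 x)"
  shows "t \<le> n \<Longrightarrow> f \<in> borel_measurable hist_space \<Longrightarrow>
    (\<integral>\<^sup>+h. f h \<partial>cso_run y0 N0 K t) = (\<integral>\<^sup>+h. likelihood l t h * f h \<partial>cso_run y1 N1 K t)"
proof (induction t arbitrary: f)
  case (Suc t)
  note [measurable] = \<open>f \<in> borel_measurable hist_space\<close>
  have t: "t < n" using Suc.prems by simp
  have [measurable]: "(\<lambda>h. \<integral>\<^sup>+h'. f h' \<partial>cso_step y0 N0 (K t) t h) \<in> borel_measurable hist_space"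
    by (intro measurable_nn_integral_cso_step[OF y0 N0 query_kernel[OF t]]) simp
  have "(\<integral>\<^sup>+h. f h \<partial>cso_run y0 N0 K (Suc t))
      = (\<integral>\<^sup>+h. \<integral>\<^sup>+h'. f h' \<partial>cso_step y0 N0 (K t) t h \<partial>cso_run y0 N0 K t)"
    by (rule nn_integral_cso_run_Suc[OF y0 N0 t]) simp
  also have "\<dots> = (\<integral>\<^sup>+h. likelihood l t h * (\<integral>\<^sup>+h'. f h' \<partial>cso_step y0 N0 (K t) t h) \<partial>cso_run y1 N1 K t)"
    using Suc by simp
  also have "\<dots> = (\<integral>\<^sup>+h. \<integral>\<^sup>+h'. likelihood l (Suc t) h' * f h' \<partial>cso_step y1 N1 (K t) t h \<partial>cso_run y1 N1 K t)"
    by (simp add: nn_integral_cso_step_likelihood[OF y0 y1 query_kernel[OF t] N0 N1 l change])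
  also have "\<dots> = (\<integral>\<^sup>+h. likelihood l (Suc t) h * f h \<partial>cso_run y1 N1 K (Suc t))"
    by (rule nn_integral_cso_run_Suc[OF y1 N1 t, symmetric]) simp
  finally show ?case .
qed (simp add: likelihood_def)

lemma nn_integral_likelihood_eq_1:
  assumes "\<And>x g. g \<in> borel_measurable borel \<Longrightarrow>
      (\<integral>\<^sup>+e. g (y0 x + e) \<partial>N0 x) = (\<integral>\<^sup>+e. l (x, y1 x + e) * g (y1 x + e) \<partial>N1 x)"
  shows "(\<integral>\<^sup>+h. likelihood l n h \<partial>cso_run y1 N1 K n) = 1"
  using nn_integral_cso_run_likelihood[OF assms order.refl, of "\<lambda>_. 1"]
    prob_space.emeasure_space_1[OF prob_space_cso_run[OF y0 N0 order.refl]]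
  by simp

lemma nn_integral_likelihood_square_le:
  assumes second_moment: "\<And>x. (\<integral>\<^sup>+e. (l (x, y1 x + e))\<^sup>2 \<partial>N1 x) \<le> c"
  shows "t \<le> n \<Longrightarrow> (\<integral>\<^sup>+h. (likelihood l t h)\<^sup>2 \<partial>cso_run y1 N1 K t) \<le> c ^ t"
proof (induction t)
  case 0
  then show ?case
    using prob_space.emeasure_space_1[OF prob_space_cso_run[OF y1 N1, of 0]] by (simp add: likelihood_def)
next
  case (Suc t)
  have t: "t < n" using Suc.prems by simp
  have "(\<integral>\<^sup>+h. (likelihood l (Suc t) h)\<^sup>2 \<partial>cso_run y1 N1 K (Suc t))
      = (\<integral>\<^sup>+h. \<integral>\<^sup>+h'. (likelihood l (Suc t) h')\<^sup>2 \<partial>cso_step y1 N1 (K t) t h \<partial>cso_run y1 N1 K t)"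
    by (rule nn_integral_cso_run_Suc[OF y1 N1 t]) simp
  also have "\<dots> \<le> (\<integral>\<^sup>+h. (likelihood l t h)\<^sup>2 * c \<partial>cso_run y1 N1 K t)"
    by (intro nn_integral_mono nn_integral_cso_step_likelihood_square[OF y1 y1 query_kernel[OF t] N1 l second_moment])
  also have "\<dots> = (\<integral>\<^sup>+h. (likelihood l t h)\<^sup>2 \<partial>cso_run y1 N1 K t) * c"
    using sets_cso_run[OF y1 N1] t by (intro nn_integral_multc) (simp cong: measurable_cong_sets)
  also have "\<dots> \<le> c ^ t * c"
    using Suc t by (intro mult_right_mono) auto
  finally show ?case by (simp add: ac_simps)
qed

end

end

lemma (in prob_space) integral_le_nonneg_const:
  fixes f :: "'a \<Rightarrow> real"
  assumes "AE x in M. f x \<le> c" "0 \<le> c"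
  shows "(\<integral>x. f x \<partial>M) \<le> c"
  using integral_le_const[OF _ assms(1)] assms(2) by (cases "integrable M f") (auto simp: not_integrable_integral_eq)

lemma admissibleD:
  assumes "admissible K Outp" "1 \<le> n"
  shows "query_kernels n (K n)"
    and "\<And>t h. t < n \<Longrightarrow> AE x in K n t h. x \<in> cso_cube"
    and "Outp n \<in> hist_space \<rightarrow>\<^sub>M prob_algebra borel"
    and "\<And>h. AE x in Outp n h. \<exists>i<n. x = fst (h i)"
  using assms unfolding admissible_def query_kernels_def by auto

lemma expected_regret_le_M:
  fixes K :: "nat \<Rightarrow> nat \<Rightarrow> 'd hist \<Rightarrow> (real^'d) measure"
  assumes "admissible K Outp" "1 \<le> n" "P \<in> cso_class \<alpha> M Mt \<sigma>" "0 < \<alpha>" "0 < M"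
  shows "expected_regret P K Outp n \<le> M"
proof -
  interpret query_kernels n "K n" using admissibleD[OF assms(1,2)] by simp
  obtain y N where P: "P = (y, N)" by (cases P)
  from assms(3)[unfolded P cso_class_def] have [measurable]: "y \<in> borel_measurable borel"
    and N: "N \<in> borel \<rightarrow>\<^sub>M prob_algebra borel"
    and unique_max: "\<exists>!x. x \<in> cso_cube \<and> (\<forall>z\<in>cso_cube. y z \<le> y x)"
    and upper: "\<forall>x\<in>cso_cube. \<bar>y (cso_opt y) - y x\<bar> \<le> M * linf (cso_opt y - x) powr \<alpha>"
    by auto
  have opt: "cso_opt y \<in> cso_cube" by (rule cso_opt_in_cube[OF unique_max])
  note Outp = admissibleD(3,4)[OF assms(1,2)]
  have bounded: "y (cso_opt y) - y x \<le> M" if "x \<in> cso_cube" for x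
  proof -
    have "linf (cso_opt y - x) powr \<alpha> \<le> 1"
      using powr_le1[of \<alpha>] linf_nonneg[of "cso_opt y - x"] linf_diff_le_1[OF opt that] assms(4) by simp
    then show ?thesis
      using upper that assms(5) by (smt (verit) mult_left_le)
  qed
  have "AE h in cso_run y N (K n) n. \<forall>i<n. fst (h i) \<in> cso_cube"
    using AE_cso_run_queries_in_cube[OF _ N admissibleD(2)[OF assms(1,2)]] by simp
  then have "AE h in cso_run y N (K n) n. (\<integral>x. y (cso_opt y) - y x \<partial>Outp n h) \<le> M"
  proof eventually_elim
    case (elim h)
    interpret prob_space "Outp n h"
      using measurable_space[OF Outp(1), of h] by (simp add: space_prob_algebra)
    show ?case
      using Outp(2)[of h] elim bounded assms(5)
      by (intro integral_le_nonneg_const) (auto elim!: eventually_mono)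
  qed
  then show ?thesis
    unfolding P expected_regret_def using assms(5) prob_space_cso_run[OF _ N]
    by (simp add: prob_space.integral_le_nonneg_const)
qed

lemma measurable_nn_integral_simple_regret [measurable]:
  fixes y :: "real^'d \<Rightarrow> real"
  assumes "Q \<in> hist_space \<rightarrow>\<^sub>M prob_algebra borel" "y \<in> borel_measurable borel"
  shows "(\<lambda>h. \<integral>\<^sup>+x. simple_regret y x \<partial>Q h) \<in> borel_measurable hist_space"
  using assms unfolding simple_regret_def
  by (auto intro!: measurable_compose[OF measurable_prob_algebraD nn_integral_measurable_subprob_algebra])

lemma expected_regret_eq_nn_integral:
  fixes K :: "nat \<Rightarrow> nat \<Rightarrow> 'd hist \<Rightarrow> (real^'d) measure" and y :: "real^'d \<Rightarrow> real"
  assumes "admissible K Outp" "1 \<le> n"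
    and y [measurable]: "y \<in> borel_measurable borel" and N: "N \<in> borel \<rightarrow>\<^sub>M prob_algebra borel"
    and regret_bounds: "\<And>x. 0 \<le> simple_regret y x" "\<And>x. simple_regret y x \<le> B"
  shows "ennreal (expected_regret (y, N) K Outp n)
      = (\<integral>\<^sup>+h. \<integral>\<^sup>+x. simple_regret y x \<partial>Outp n h \<partial>cso_run y N (K n) n)"
    and "0 \<le> expected_regret (y, N) K Outp n"
proof -
  interpret query_kernels n "K n" using admissibleD[OF assms(1,2)] by simp
  note Outp [measurable] = admissibleD(3)[OF assms(1,2)]
  have [measurable]: "simple_regret y \<in> borel_measurable borel"
    unfolding simple_regret_def[abs_def] by measurable
  define g where "g h = (\<integral>x. simple_regret y x \<partial>Outp n h)" for h
  have g_bounds: "0 \<le> g h" "g h \<le> B" and nn_integral_g: "(\<integral>\<^sup>+x. simple_regret y x \<partial>Outp n h) = g h" for h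
  proof -
    interpret prob_space "Outp n h"
      using measurable_space[OF Outp, of h] by (simp add: space_prob_algebra)
    have sets: "sets (Outp n h) = sets borel"
      using measurable_space[OF Outp, of h] by (simp add: space_prob_algebra)
    have "integrable (Outp n h) (simple_regret y)"
      using regret_bounds sets by (intro integrable_const_bound[where B=B]) (auto cong: measurable_cong_sets)
    then show "(\<integral>\<^sup>+x. simple_regret y x \<partial>Outp n h) = g h"
      unfolding g_def using regret_bounds by (intro nn_integral_eq_integral) auto
    show "0 \<le> g h" unfolding g_def using regret_bounds by (intro integral_nonneg_AE) auto
    show "g h \<le> B" unfolding g_def using regret_bounds order_trans[OF regret_bounds]
      by (intro integral_le_nonneg_const) auto
  qed
  interpret R: prob_space "cso_run y N (K n) n" by (rule prob_space_cso_run[OF y N]) simp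
  have "g \<in> borel_measurable (cso_run y N (K n) n)"
    unfolding g_def[abs_def] measurable_cong_sets[OF sets_cso_run[OF y N order.refl] refl]
    by (rule measurable_compose[OF measurable_prob_algebraD[OF Outp] integral_measurable_subprob_algebra]) simp
  then have "integrable (cso_run y N (K n) n) g"
    using g_bounds by (intro R.integrable_const_bound[where B=B]) auto
  moreover have "expected_regret (y, N) K Outp n = (\<integral>h. g h \<partial>cso_run y N (K n) n)"
    unfolding expected_regret_def g_def simple_regret_def by simp
  ultimately show "ennreal (expected_regret (y, N) K Outp n)
      = (\<integral>\<^sup>+h. \<integral>\<^sup>+x. simple_regret y x \<partial>Outp n h \<partial>cso_run y N (K n) n)"
    "0 \<le> expected_regret (y, N) K Outp n"
    using g_bounds by (simp_all add: nn_integral_g nn_integral_eq_integral integral_nonneg_AE)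
qed

section \<open>Two lower-bound principles\<close>

lemma (in prob_space) exists_small_prob_UN:
  assumes events: "\<And>i j. Ev i j \<in> events"
    and disjoint: "\<And>i. i < n \<Longrightarrow> disjoint_family_on (Ev i) {..<m}" and "0 < m"
  shows "\<exists>j<m. real m * prob (\<Union>i<n. Ev i j) \<le> real n"
proof (rule ccontr)
  have "(\<Sum>j<m. prob (\<Union>i<n. Ev i j)) \<le> (\<Sum>j<m. \<Sum>i<n. prob (Ev i j))"
    by (intro sum_mono finite_measure_subadditive_finite) (auto simp: events)
  also have "\<dots> = (\<Sum>i<n. prob (\<Union>j<m. Ev i j))"
    by (subst sum.swap) (auto simp: events disjoint intro!: sum.cong finite_measure_finite_Union[symmetric])
  also have "\<dots> \<le> (\<Sum>i<n. 1)"
    by (intro sum_mono) auto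
  finally have sum_le: "(\<Sum>j<m. prob (\<Union>i<n. Ev i j)) \<le> real n" by simp
  assume "\<not> ?thesis"
  then have "real n < real m * prob (\<Union>i<n. Ev i j)" if "j < m" for j
    using that by force
  then have "(\<Sum>j<m. real n) < (\<Sum>j<m. real m * prob (\<Union>i<n. Ev i j))"
    using \<open>0 < m\<close> by (intro sum_strict_mono) auto
  then show False
    using sum_le mult_left_mono[OF sum_le, of "real m"] by (simp add: sum_distrib_left)
qed

lemma nn_integral_coupled_ge:
  fixes g0 g1 :: "'a \<Rightarrow> ennreal"
  assumes [measurable]: "E \<in> sets R0" "g0 \<in> borel_measurable R0" "g1 \<in> borel_measurable R0"
    and coupled: "(\<integral>\<^sup>+x. indicator E x * g1 x \<partial>R0) = (\<integral>\<^sup>+x. indicator E x * g1 x \<partial>R1)"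
    and pointwise: "\<And>x. c \<le> g0 x + g1 x"
  shows "c * emeasure R0 E \<le> (\<integral>\<^sup>+x. g0 x \<partial>R0) + (\<integral>\<^sup>+x. g1 x \<partial>R1)"
proof -
  have "c * emeasure R0 E = (\<integral>\<^sup>+x. c * indicator E x \<partial>R0)"
    by (simp add: nn_integral_cmult_indicator)
  also have "\<dots> \<le> (\<integral>\<^sup>+x. indicator E x * g0 x + indicator E x * g1 x \<partial>R0)"
    using pointwise by (intro nn_integral_mono) (auto simp: indicator_def)
  also have "\<dots> = (\<integral>\<^sup>+x. indicator E x * g0 x \<partial>R0) + (\<integral>\<^sup>+x. indicator E x * g1 x \<partial>R1)"
    unfolding coupled[symmetric] by (rule nn_integral_add) auto
  also have "\<dots> \<le> (\<integral>\<^sup>+x. g0 x \<partial>R0) + (\<integral>\<^sup>+x. g1 x \<partial>R1)"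
    by (intro add_mono nn_integral_mono) (auto simp: indicator_def)
  finally show ?thesis .
qed

lemma le_cam_pointwise:
  fixes g0 g1 L c :: ennreal
  assumes "c \<le> g0 + g1"
  shows "4 * c * L \<le> 4 * (L * g0 + g1) + c * L\<^sup>2"
proof -
  have min: "c * min L 1 \<le> L * g0 + g1"
  proof (cases "L \<le> 1")
    case True
    have "c * L \<le> (g0 + g1) * L"
      by (rule mult_right_mono[OF assms]) simp
    also have "\<dots> = L * g0 + g1 * L"
      by (metis distrib_right mult.commute)
    also have "\<dots> \<le> L * g0 + g1"
      using mult_left_mono[OF True, of g1] by (simp add: add_left_mono)
    finally show ?thesis using True by (simp add: min_def)
  next
    case False
    then have "g0 \<le> L * g0" using mult_right_mono[of 1 L g0] by simp
    then show ?thesis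
      using False assms by (simp add: min_def) (metis add_right_mono order_trans)
  qed
  have quad: "4 * L \<le> 4 * min L 1 + L\<^sup>2"
  proof (cases L)
    case (real r)
    have "4 * r \<le> 4 * min r 1 + r\<^sup>2"
      using sum_power2_ge_zero[of "r - 2" 0] by (simp add: min_def power2_eq_square algebra_simps)
    then have "ennreal (4 * r) \<le> ennreal (4 * min r 1 + r\<^sup>2)"
      by (rule ennreal_leI)
    also have "\<dots> = 4 * ennreal (min r 1) + ennreal r ^ 2"
      using real by (simp add: ennreal_plus ennreal_mult ennreal_power)
    finally show ?thesis
      using real by (cases "r \<le> 1") (auto simp: min_def ennreal_mult)
  qed simp
  have "4 * c * L = c * (4 * L)"
    by (simp add: ac_simps)
  also have "\<dots> \<le> c * (4 * min L 1 + L\<^sup>2)"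
    using quad by (rule mult_left_mono) simp
  also have "\<dots> = 4 * (c * min L 1) + c * L\<^sup>2"
    by (simp add: distrib_left ac_simps)
  also have "\<dots> \<le> 4 * (L * g0 + g1) + c * L\<^sup>2"
    using min by (intro add_right_mono mult_left_mono) auto
  finally show ?thesis .
qed

text \<open>A chi-square form of Le Cam's two-point method; \<open>L\<close> plays the density of the first
  distribution with respect to \<open>R\<close>.\<close>

lemma nn_integral_le_cam:
  fixes L g0 g1 :: "'a \<Rightarrow> ennreal"
  assumes [measurable]: "L \<in> borel_measurable R" "g0 \<in> borel_measurable R" "g1 \<in> borel_measurable R"
    and total: "(\<integral>\<^sup>+x. L x \<partial>R) = 1" and pointwise: "\<And>x. c \<le> g0 x + g1 x"
  shows "4 * c \<le> 4 * ((\<integral>\<^sup>+x. L x * g0 x \<partial>R) + (\<integral>\<^sup>+x. g1 x \<partial>R)) + c * (\<integral>\<^sup>+x. (L x)\<^sup>2 \<partial>R)"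
proof -
  have "4 * c = (\<integral>\<^sup>+x. 4 * c * L x \<partial>R)"
    using total by (simp add: nn_integral_cmult)
  also have "\<dots> \<le> (\<integral>\<^sup>+x. 4 * (L x * g0 x + g1 x) + c * (L x)\<^sup>2 \<partial>R)"
    using pointwise by (intro nn_integral_mono le_cam_pointwise)
  also have "\<dots> = 4 * ((\<integral>\<^sup>+x. L x * g0 x \<partial>R) + (\<integral>\<^sup>+x. g1 x \<partial>R)) + c * (\<integral>\<^sup>+x. (L x)\<^sup>2 \<partial>R)"
    by (simp add: nn_integral_add nn_integral_cmult)
  finally show ?thesis .
qed

section \<open>Noise models\<close>

definition no_noise :: "'a \<Rightarrow> real measure" where
  "no_noise x = return borel 0"

lemma measurable_no_noise: "no_noise \<in> borel \<rightarrow>\<^sub>M prob_algebra borel"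
  unfolding no_noise_def[abs_def]
  using measurable_space[OF measurable_return_prob_space[of borel], of 0] by simp

lemma no_noise_mgf_le: "(\<integral>\<^sup>+e. ennreal (exp (lam * e)) \<partial>no_noise x) \<le> ennreal (exp (lam\<^sup>2 * \<sigma>\<^sup>2 / 2))"
  unfolding no_noise_def by (simp add: nn_integral_return)

definition two_point :: "real \<Rightarrow> real \<Rightarrow> real \<Rightarrow> real measure" where
  "two_point p a b = distr (measure_pmf (bernoulli_pmf p)) borel (\<lambda>c. if c then a else b)"

lemma sets_two_point [simp]: "sets (two_point p a b) = sets borel"
  unfolding two_point_def by simp

lemma prob_space_two_point: "prob_space (two_point p a b)"
  unfolding two_point_def by (intro prob_space.prob_space_distr) (auto simp: measure_pmf.prob_space_axioms)

lemma nn_integral_two_point: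
  assumes "0 \<le> p" "p \<le> 1" "f \<in> borel_measurable borel"
  shows "(\<integral>\<^sup>+e. f e \<partial>two_point p a b) = ennreal p * f a + ennreal (1 - p) * f b"
proof -
  have "(\<integral>\<^sup>+e. f e \<partial>two_point p a b) = (\<integral>\<^sup>+c. f (if c then a else b) \<partial>measure_pmf (bernoulli_pmf p))"
    unfolding two_point_def using assms(3) by (intro nn_integral_distr) auto
  also have "\<dots> = ennreal p * f a + ennreal (1 - p) * f b"
    using assms(1,2) by (subst nn_integral_measure_pmf_support[of UNIV]) (auto simp: UNIV_bool ac_simps)
  finally show ?thesis .
qed

lemma measurable_two_point:
  assumes [measurable]: "q \<in> borel_measurable borel" "a \<in> borel_measurable borel" "b \<in> borel_measurable borel"
    and q: "\<And>x. 0 \<le> q x" "\<And>x. q x \<le> 1"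
  shows "(\<lambda>x. two_point (q x) (a x) (b x)) \<in> borel \<rightarrow>\<^sub>M prob_algebra borel"
proof (rule measurable_prob_algebraI)
  show "(\<lambda>x. two_point (q x) (a x) (b x)) \<in> borel \<rightarrow>\<^sub>M subprob_algebra borel"
  proof (rule measurable_subprob_algebra)
    fix X :: "real set" assume [measurable]: "X \<in> sets borel"
    have "emeasure (two_point (q x) (a x) (b x)) X
        = ennreal (q x) * indicator X (a x) + ennreal (1 - q x) * indicator X (b x)" for x
      using nn_integral_two_point[OF q(1,2), of "indicator X" x "a x" "b x"] by simp
    then show "(\<lambda>x. emeasure (two_point (q x) (a x) (b x)) X) \<in> borel_measurable borel"
      by simp
  qed (auto intro: prob_space_two_point prob_space_imp_subprob_space)
qed (rule prob_space_two_point)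

lemma bernoulli_mgf_le:
  fixes p h :: real
  assumes "0 \<le> p" "p \<le> 1"
  shows "(1 - p) * exp (- h * p) + p * exp (h * (1 - p)) \<le> exp (h\<^sup>2 / 8)"
proof -
  have nonneg_case: "(1 - p) * exp (- h * p) + p * exp (h * (1 - p)) \<le> exp (h\<^sup>2 / 8)"
    if "0 \<le> p" "p \<le> 1" "0 \<le> h" for p h :: real
  proof -
    have pos: "0 < 1 + p * (exp h - 1)"
      using that by (simp add: add_pos_nonneg)
    have "(1 - p) * exp (- h * p) + p * exp (h * (1 - p)) = exp (- h * p + ln (1 + p * (exp h - 1)))"
      using pos by (simp add: exp_add exp_diff exp_minus field_simps)
    also have "\<dots> \<le> exp (h\<^sup>2 / 8)"
      using Hoeffdings_lemma_aux[of h p] that by simp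
    finally show ?thesis .
  qed
  show ?thesis
  proof (cases "0 \<le> h")
    case False
    then show ?thesis
      using nonneg_case[of "1 - p" "- h"] assms by (simp add: algebra_simps)
  qed (use nonneg_case assms in auto)
qed

lemma two_point_mgf_le:
  assumes "0 \<le> p" "p \<le> 1" and mean_zero: "p * a + (1 - p) * b = 0" and range: "a - b = 2 * \<sigma>"
  shows "(\<integral>\<^sup>+e. ennreal (exp (lam * e)) \<partial>two_point p a b) \<le> ennreal (exp (lam\<^sup>2 * \<sigma>\<^sup>2 / 2))"
proof -
  have ab: "a = (1 - p) * (2 * \<sigma>)" "b = - p * (2 * \<sigma>)"
    using mean_zero range by (auto simp: algebra_simps)
  have "(\<integral>\<^sup>+e. ennreal (exp (lam * e)) \<partial>two_point p a b) = ennreal (p * exp (lam * a) + (1 - p) * exp (lam * b))"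
    using assms(1,2) by (simp add: nn_integral_two_point ennreal_plus ennreal_mult)
  also have "p * exp (lam * a) + (1 - p) * exp (lam * b) \<le> exp ((lam * (2 * \<sigma>))\<^sup>2 / 8)"
    using bernoulli_mgf_le[OF assms(1,2), of "lam * (2 * \<sigma>)"] unfolding ab by (simp add: algebra_simps)
  also have "(lam * (2 * \<sigma>))\<^sup>2 / 8 = lam\<^sup>2 * \<sigma>\<^sup>2 / 2"
    by (simp add: power2_eq_square)
  finally show ?thesis by (simp add: ennreal_leI)
qed

lemma nn_integral_two_point_reweight:
  fixes l :: "real \<Rightarrow> ennreal"
  assumes "0 < p" "p < 1" "0 < q" "q < 1" and l: "l a = ennreal (p / q)" "l b = ennreal ((1 - p) / (1 - q))"
    and [measurable]: "l \<in> borel_measurable borel" "g \<in> borel_measurable borel"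
  shows "(\<integral>\<^sup>+e. g (c0 + e) \<partial>two_point p (a - c0) (b - c0))
    = (\<integral>\<^sup>+e. l (c1 + e) * g (c1 + e) \<partial>two_point q (a - c1) (b - c1))"
proof -
  have "ennreal q * ennreal (p / q) = ennreal p" "ennreal (1 - q) * ennreal ((1 - p) / (1 - q)) = ennreal (1 - p)"
    using assms(1-4) by (simp_all flip: ennreal_mult)
  then show ?thesis
    using assms(1-4) by (simp add: nn_integral_two_point l mult.assoc[symmetric])
qed

lemma nn_integral_two_point_likelihood_square:
  fixes l :: "real \<Rightarrow> ennreal"
  assumes "0 < p" "p < 1" "0 < q" "q < 1" and l: "l a = ennreal (p / q)" "l b = ennreal ((1 - p) / (1 - q))"
    and [measurable]: "l \<in> borel_measurable borel"
  shows "(\<integral>\<^sup>+e. (l (c1 + e))\<^sup>2 \<partial>two_point q (a - c1) (b - c1)) = ennreal (p\<^sup>2 / q + (1 - p)\<^sup>2 / (1 - q))"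
proof -
  have "ennreal q * (ennreal (p / q))\<^sup>2 = ennreal (p\<^sup>2 / q)"
      "ennreal (1 - q) * (ennreal ((1 - p) / (1 - q)))\<^sup>2 = ennreal ((1 - p)\<^sup>2 / (1 - q))"
    using assms(1-4) by (simp_all add: power2_eq_square flip: ennreal_mult)
  then show ?thesis
    using assms(1-4) by (simp add: nn_integral_two_point l ennreal_plus)
qed

lemma chi_square_two_point_le:
  fixes u :: real and n :: nat
  assumes "0 \<le> u" "u \<le> 1 / (8 * sqrt n)" "1 \<le> n"
  shows "(1/2 - u)\<^sup>2 / (1/2 + u) + (1/2 + u)\<^sup>2 / (1/2 - u) \<le> 1 + 4 / (15 * real n)"
proof -
  have "u\<^sup>2 \<le> (1 / (8 * sqrt n))\<^sup>2"
    using assms(1,2) by (intro power_mono) auto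
  then have u2: "u\<^sup>2 \<le> 1 / (64 * real n)"
    using assms(3) by (simp add: power_divide power_mult_distrib)
  also have "\<dots> \<le> 1 / 64"
    using assms(3) by (simp add: field_simps)
  finally have pos: "0 < 1/4 - u\<^sup>2" by simp
  have cubes: "a\<^sup>2 / b + b\<^sup>2 / a = (a ^ 3 + b ^ 3) / (b * a)" if "0 < a" "0 < b" for a b :: real
    using that by (simp add: field_simps power2_eq_square power3_eq_cube)
  have "u < 1/2"
    using assms(3) order_trans[OF assms(2), of "1/8"] by (simp add: field_simps)
  then have "(1/2 - u)\<^sup>2 / (1/2 + u) + (1/2 + u)\<^sup>2 / (1/2 - u)
      = ((1/2 - u) ^ 3 + (1/2 + u) ^ 3) / ((1/2 + u) * (1/2 - u))"
    using assms(1) by (intro cubes) auto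
  also have "\<dots> = ((1/4 - u\<^sup>2) + 4 * u\<^sup>2) / (1/4 - u\<^sup>2)"
    by (simp add: power2_eq_square power3_eq_cube algebra_simps)
  also have "\<dots> = 1 + 4 * u\<^sup>2 / (1/4 - u\<^sup>2)"
    by (subst add_divide_distrib) (use pos in simp)
  also have "4 * u\<^sup>2 / (1/4 - u\<^sup>2) \<le> 4 * u\<^sup>2 / (15/64)"
    using u2 \<open>1 / (64 * real n) \<le> 1 / 64\<close> by (intro divide_left_mono) auto
  also have "\<dots> \<le> 4 / (15 * real n)"
    using u2 assms(3) by (simp add: field_simps)
  finally show ?thesis by simp
qed

lemma one_plus_power_le_3:
  fixes n :: nat assumes "1 \<le> n"
  shows "(1 + 4 / (15 * real n)) ^ n \<le> 3"
proof -
  have "(1 + 4 / (15 * real n)) ^ n \<le> exp (4 / (15 * real n)) ^ n"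
    by (intro power_mono) (auto simp: add_nonneg_nonneg)
  also have "\<dots> = exp (4 / 15)"
    using assms by (simp flip: exp_of_nat_mult)
  also have "\<dots> \<le> exp 1" by simp
  also have "\<dots> \<le> 3" using e_less_272 by simp
  finally show ?thesis .
qed

lemma (in query_kernels) nn_integral_likelihood_square_le_3:
  fixes y1 :: "real^'d \<Rightarrow> real"
  assumes "y1 \<in> borel_measurable borel" "N1 \<in> borel \<rightarrow>\<^sub>M prob_algebra borel" "l \<in> borel_measurable borel"
    and "\<And>x. (\<integral>\<^sup>+e. (l (x, y1 x + e))\<^sup>2 \<partial>N1 x) \<le> ennreal (1 + 4 / (15 * real n))" and "1 \<le> n"
  shows "(\<integral>\<^sup>+h. (likelihood l n h)\<^sup>2 \<partial>cso_run y1 N1 K n) \<le> 3"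
proof -
  have "(\<integral>\<^sup>+h. (likelihood l n h)\<^sup>2 \<partial>cso_run y1 N1 K n) \<le> ennreal (1 + 4 / (15 * real n)) ^ n"
    using nn_integral_likelihood_square_le[OF assms(1,1,2,2,3,4)] by simp
  also have "\<dots> = ennreal ((1 + 4 / (15 * real n)) ^ n)"
    by (rule ennreal_power) simp
  also have "\<dots> \<le> ennreal 3"
    by (rule ennreal_leI[OF one_plus_power_le_3[OF \<open>1 \<le> n\<close>]])
  finally show ?thesis by simp
qed

text \<open>Both observations \<open>y\<^sub>i x + e\<close> take only the two values \<open>m x \<plusminus> \<sigma>\<close>, where \<open>m x\<close> is the
  midpoint of \<open>y\<^sub>0 x\<close> and \<open>y\<^sub>1 x\<close>; their probabilities \<open>1/2 \<mp> u x\<close> and \<open>1/2 \<plusminus> u x\<close>, with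
  \<open>u = (y\<^sub>1 - y\<^sub>0) / (4 \<sigma>)\<close>, make both noises centred.\<close>

lemma two_point_noise_pair:
  fixes y0 y1 :: "'a::second_countable_topology \<Rightarrow> real" and n :: nat
  assumes [measurable]: "y0 \<in> borel_measurable borel" "y1 \<in> borel_measurable borel"
    and "0 < \<sigma>" "1 \<le> n"
    and close: "\<And>x. 0 \<le> y1 x - y0 x" "\<And>x. y1 x - y0 x \<le> \<sigma> / (2 * sqrt n)"
  obtains N0 N1 :: "'a \<Rightarrow> real measure" and l :: "'a \<times> real \<Rightarrow> ennreal"
  where "N0 \<in> borel \<rightarrow>\<^sub>M prob_algebra borel" "N1 \<in> borel \<rightarrow>\<^sub>M prob_algebra borel"
    and "\<And>x lam. (\<integral>\<^sup>+e. ennreal (exp (lam * e)) \<partial>N0 x) \<le> ennreal (exp (lam\<^sup>2 * \<sigma>\<^sup>2 / 2))"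
    and "\<And>x lam. (\<integral>\<^sup>+e. ennreal (exp (lam * e)) \<partial>N1 x) \<le> ennreal (exp (lam\<^sup>2 * \<sigma>\<^sup>2 / 2))"
    and "l \<in> borel_measurable borel"
    and "\<And>x g. g \<in> borel_measurable borel \<Longrightarrow>
      (\<integral>\<^sup>+e. g (y0 x + e) \<partial>N0 x) = (\<integral>\<^sup>+e. l (x, y1 x + e) * g (y1 x + e) \<partial>N1 x)"
    and "\<And>x. (\<integral>\<^sup>+e. (l (x, y1 x + e))\<^sup>2 \<partial>N1 x) \<le> ennreal (1 + 4 / (15 * real n))"
proof -
  define u where "u x = (y1 x - y0 x) / (4 * \<sigma>)" for x
  define m where "m x = (y0 x + y1 x) / 2" for x
  have [measurable]: "u \<in> borel_measurable borel" "m \<in> borel_measurable borel"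
    unfolding u_def[abs_def] m_def[abs_def] by measurable
  have u_nonneg: "0 \<le> u x" for x
    unfolding u_def using close(1)[of x] \<open>0 < \<sigma>\<close> by simp
  have u_le: "u x \<le> 1 / (8 * sqrt n)" for x
    unfolding u_def using close(2)[of x] \<open>0 < \<sigma>\<close> by (simp add: field_simps)
  have "1 / (8 * sqrt n) \<le> 1 / 8"
    using \<open>1 \<le> n\<close> by (simp add: field_simps)
  then have u_small: "u x < 1/2" for x
    using u_le[of x] by linarith
  define q0 where "q0 x = 1/2 - u x" for x
  define q1 where "q1 x = 1/2 + u x" for x
  have q_bounds: "0 < q0 x" "q0 x < 1" "0 < q1 x" "q1 x < 1" for x
    unfolding q0_def q1_def using u_nonneg[of x] u_small[of x] by auto
  have [measurable]: "q0 \<in> borel_measurable borel" "q1 \<in> borel_measurable borel"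
    unfolding q0_def[abs_def] q1_def[abs_def] by measurable
  define N0 where "N0 x = two_point (q0 x) (m x + \<sigma> - y0 x) (m x - \<sigma> - y0 x)" for x
  define N1 where "N1 x = two_point (q1 x) (m x + \<sigma> - y1 x) (m x - \<sigma> - y1 x)" for x
  define l where "l = (\<lambda>(x, v). if v = m x + \<sigma> then ennreal (q0 x / q1 x)
    else ennreal ((1 - q0 x) / (1 - q1 x)))"
  have N0: "N0 \<in> borel \<rightarrow>\<^sub>M prob_algebra borel"
    unfolding N0_def[abs_def] by (rule measurable_two_point, measurable) (simp_all add: q_bounds less_imp_le)
  have N1: "N1 \<in> borel \<rightarrow>\<^sub>M prob_algebra borel"
    unfolding N1_def[abs_def] by (rule measurable_two_point, measurable) (simp_all add: q_bounds less_imp_le)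
  have l [measurable]: "l \<in> borel_measurable borel"
  proof -
    have "l \<in> borel_measurable (borel \<Otimes>\<^sub>M borel)" unfolding l_def by measurable
    then show ?thesis by (simp add: borel_prod)
  qed
  have l_values: "l (x, m x + \<sigma>) = ennreal (q0 x / q1 x)"
      "l (x, m x - \<sigma>) = ennreal ((1 - q0 x) / (1 - q1 x))" for x
    unfolding l_def using \<open>0 < \<sigma>\<close> by auto
  have mgf0: "(\<integral>\<^sup>+e. ennreal (exp (lam * e)) \<partial>N0 x) \<le> ennreal (exp (lam\<^sup>2 * \<sigma>\<^sup>2 / 2))" for x lam
    unfolding N0_def using q_bounds[of x] \<open>0 < \<sigma>\<close>
    by (intro two_point_mgf_le) (auto simp: q0_def m_def u_def field_simps)
  have mgf1: "(\<integral>\<^sup>+e. ennreal (exp (lam * e)) \<partial>N1 x) \<le> ennreal (exp (lam\<^sup>2 * \<sigma>\<^sup>2 / 2))" for x lam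
    unfolding N1_def using q_bounds[of x] \<open>0 < \<sigma>\<close>
    by (intro two_point_mgf_le) (auto simp: q1_def m_def u_def field_simps)
  have change: "(\<integral>\<^sup>+e. g (y0 x + e) \<partial>N0 x) = (\<integral>\<^sup>+e. l (x, y1 x + e) * g (y1 x + e) \<partial>N1 x)"
    if "g \<in> borel_measurable borel" for x g
    unfolding N0_def N1_def
    by (rule nn_integral_two_point_reweight[where l="\<lambda>v. l (x, v)"]) (simp_all add: q_bounds l_values that)
  have second_moment: "(\<integral>\<^sup>+e. (l (x, y1 x + e))\<^sup>2 \<partial>N1 x) \<le> ennreal (1 + 4 / (15 * real n))" for x
  proof -
    have "(\<integral>\<^sup>+e. (l (x, y1 x + e))\<^sup>2 \<partial>N1 x) = ennreal ((q0 x)\<^sup>2 / q1 x + (1 - q0 x)\<^sup>2 / (1 - q1 x))"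
      unfolding N1_def
      by (rule nn_integral_two_point_likelihood_square[where l="\<lambda>v. l (x, v)"]) (simp_all add: q_bounds l_values)
    also have "(q0 x)\<^sup>2 / q1 x + (1 - q0 x)\<^sup>2 / (1 - q1 x)
        = (1/2 - u x)\<^sup>2 / (1/2 + u x) + (1/2 + u x)\<^sup>2 / (1/2 - u x)"
      unfolding q0_def q1_def by (simp add: algebra_simps)
    also have "\<dots> \<le> 1 + 4 / (15 * real n)"
      by (rule chi_square_two_point_le[OF u_nonneg u_le \<open>1 \<le> n\<close>])
    finally show ?thesis by (simp add: ennreal_leI)
  qed
  show thesis
    by (rule that[OF N0 N1 mgf0 mgf1 l change second_moment])
qed

section \<open>The two lower bounds\<close>

context cso_instances
begin

lemma nn_integral_regret_sum_ge:
  fixes Q :: "(real^'d) measure"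
  assumes "prob_space Q" "sets Q = sets borel" "0 < D" "D \<le> 1"
  shows "ennreal (Mt * D powr \<alpha>)
    \<le> (\<integral>\<^sup>+x. simple_regret y_base x \<partial>Q) + (\<integral>\<^sup>+x. simple_regret (y_bump D) x \<partial>Q)"
proof -
  interpret prob_space Q by fact
  have [measurable]: "simple_regret y_base \<in> borel_measurable Q" "simple_regret (y_bump D) \<in> borel_measurable Q"
    unfolding simple_regret_def[abs_def] measurable_cong_sets[OF assms(2) refl] by measurable
  have "ennreal (Mt * D powr \<alpha>) \<le> ennreal (simple_regret y_base x) + ennreal (simple_regret (y_bump D) x)" for x
    using regret_sum_ge[OF assms(3,4), of x] simple_regret_y_base_nonneg[of x]
      simple_regret_y_bump_nonneg[OF assms(3,4), of x]
    by (simp add: ennreal_leI flip: ennreal_plus)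
  then have "ennreal (Mt * D powr \<alpha>)
      \<le> (\<integral>\<^sup>+x. ennreal (simple_regret y_base x) + ennreal (simple_regret (y_bump D) x) \<partial>Q)"
    by (intro nn_integral_ge_const) auto
  then show ?thesis by (simp add: nn_integral_add)
qed

text \<open>The \<open>2 n\<close> candidate bumps have disjoint supports, so the \<open>n\<close> queries made on
  \<open>y_base\<close> cannot visit all of them with large probability.\<close>

lemma exists_rarely_visited_bump:
  fixes K :: "nat \<Rightarrow> 'd hist \<Rightarrow> (real^'d) measure"
  assumes "query_kernels n K" "1 \<le> n"
  shows "\<exists>j<2 * n. 1/2 \<le> measure (cso_run y_base no_noise K n)
    (avoiding {x::real^'d. y_bump ((1/2) ^ Suc j) x \<noteq> y_base x} n)"
proof -
  interpret query_kernels n K by fact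
  define S where "S j = {x::real^'d. y_bump ((1/2) ^ Suc j) x \<noteq> y_base x}" for j
  have [measurable]: "S j \<in> sets borel" for j
  proof -
    have "{x \<in> space borel. y_bump ((1/2) ^ Suc j) x \<noteq> y_base x} \<in> sets borel" by measurable
    then show ?thesis unfolding S_def by simp
  qed
  define Ev where "Ev i j = {h::'d hist. fst (h i) \<in> S j}" for i j
  interpret R: prob_space "cso_run y_base no_noise K n"
    by (rule prob_space_cso_run[OF _ measurable_no_noise]) auto
  have sets_R: "sets (cso_run y_base no_noise K n) = sets hist_space"
    by (rule sets_cso_run[OF _ measurable_no_noise]) auto
  have Ev_events: "Ev i j \<in> R.events" for i j
  proof -
    have "{h \<in> space hist_space. fst (h i) \<in> S j} \<in> sets hist_space" by measurable
    then show ?thesis unfolding Ev_def sets_R by simp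
  qed
  have S_disjoint: "S j \<inter> S k = {}" if "j \<noteq> k" for j k
  proof -
    have "S j \<inter> S k = {}" if "j < k" for j k
      using bump_regions_disjoint[OF that] unfolding S_def by blast
    then show ?thesis using \<open>j \<noteq> k\<close> by (metis Int_commute linorder_neqE_nat)
  qed
  have "disjoint_family_on (Ev i) {..<2 * n}" for i
    using S_disjoint unfolding disjoint_family_on_def Ev_def by blast
  then obtain j where "j < 2 * n" and small: "real (2 * n) * R.prob (\<Union>i<n. Ev i j) \<le> real n"
    using R.exists_small_prob_UN[of Ev n "2 * n"] Ev_events assms(2) by auto
  have "avoiding (S j) n = space (cso_run y_base no_noise K n) - (\<Union>i<n. Ev i j)"
    using sets_eq_imp_space_eq[OF sets_R] unfolding avoiding_def Ev_def by auto
  then have "R.prob (avoiding (S j) n) = 1 - R.prob (\<Union>i<n. Ev i j)"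
    using Ev_events by (simp add: R.prob_compl sets.countable_UN'')
  also have "\<dots> \<ge> 1/2"
    using small assms(2) by (simp add: field_simps)
  finally show ?thesis
    using \<open>j < 2 * n\<close> unfolding S_def by auto
qed

lemma expected_regret_y_base:
  fixes K :: "nat \<Rightarrow> nat \<Rightarrow> 'd hist \<Rightarrow> (real^'d) measure"
  assumes "admissible K Outp" "1 \<le> n" "N \<in> borel \<rightarrow>\<^sub>M prob_algebra borel"
  shows "ennreal (expected_regret (y_base, N) K Outp n)
      = (\<integral>\<^sup>+h. \<integral>\<^sup>+x. simple_regret y_base x \<partial>Outp n h \<partial>cso_run y_base N (K n) n)"
    and "0 \<le> expected_regret (y_base, N) K Outp n"
  by (rule expected_regret_eq_nn_integral[OF assms(1,2) borel_measurable_y_base assms(3)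
        simple_regret_y_base_nonneg simple_regret_y_base_le])+

lemma expected_regret_y_bump:
  fixes K :: "nat \<Rightarrow> nat \<Rightarrow> 'd hist \<Rightarrow> (real^'d) measure"
  assumes "admissible K Outp" "1 \<le> n" "N \<in> borel \<rightarrow>\<^sub>M prob_algebra borel" "0 < D" "D \<le> 1"
  shows "ennreal (expected_regret (y_bump D, N) K Outp n)
      = (\<integral>\<^sup>+h. \<integral>\<^sup>+x. simple_regret (y_bump D) x \<partial>Outp n h \<partial>cso_run (y_bump D) N (K n) n)"
    and "0 \<le> expected_regret (y_bump D, N) K Outp n"
  by (rule expected_regret_eq_nn_integral[OF assms(1,2) borel_measurable_y_bump assms(3)
        simple_regret_y_bump_nonneg[OF assms(4,5)] simple_regret_y_bump_le[OF assms(4,5)]])+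

lemma coupled_regret_bound:
  fixes K :: "nat \<Rightarrow> nat \<Rightarrow> 'd hist \<Rightarrow> (real^'d) measure"
  assumes adm: "admissible K Outp" and "1 \<le> n" and D: "0 < D" "D \<le> 1"
  defines "S \<equiv> {x::real^'d. y_bump D x \<noteq> y_base x}"
  shows "Mt * D powr \<alpha> * measure (cso_run y_base no_noise (K n) n) (avoiding S n)
    \<le> expected_regret (y_base, no_noise) K Outp n + expected_regret (y_bump D, no_noise) K Outp n"
proof -
  interpret query_kernels n "K n" using admissibleD[OF adm \<open>1 \<le> n\<close>] by simp
  note Outp [measurable] = admissibleD(3)[OF adm \<open>1 \<le> n\<close>]
  define R0 where "R0 = cso_run y_base no_noise (K n) n"
  have [measurable]: "S \<in> sets borel"
  proof -
    have "{x \<in> space borel. y_bump D x \<noteq> y_base x} \<in> sets borel" by measurable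
    then show ?thesis unfolding S_def by simp
  qed
  interpret R0: prob_space R0
    unfolding R0_def by (rule prob_space_cso_run[OF _ measurable_no_noise]) auto
  have sets_R0: "sets R0 = sets hist_space"
    unfolding R0_def by (rule sets_cso_run[OF _ measurable_no_noise]) auto
  have "ennreal (Mt * D powr \<alpha>) * emeasure R0 (avoiding S n)
      \<le> (\<integral>\<^sup>+h. \<integral>\<^sup>+x. simple_regret y_base x \<partial>Outp n h \<partial>R0)
        + (\<integral>\<^sup>+h. \<integral>\<^sup>+x. simple_regret (y_bump D) x \<partial>Outp n h \<partial>cso_run (y_bump D) no_noise (K n) n)"
  proof (rule nn_integral_coupled_ge)
    show "(\<integral>\<^sup>+h. indicator (avoiding S n) h * (\<integral>\<^sup>+x. simple_regret (y_bump D) x \<partial>Outp n h) \<partial>R0)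
        = (\<integral>\<^sup>+h. indicator (avoiding S n) h * (\<integral>\<^sup>+x. simple_regret (y_bump D) x \<partial>Outp n h)
            \<partial>cso_run (y_bump D) no_noise (K n) n)"
      unfolding R0_def S_def
      by (rule nn_integral_cso_run_avoiding[symmetric]) (auto intro: measurable_no_noise)
    show "ennreal (Mt * D powr \<alpha>)
        \<le> (\<integral>\<^sup>+x. simple_regret y_base x \<partial>Outp n h) + (\<integral>\<^sup>+x. simple_regret (y_bump D) x \<partial>Outp n h)" for h
      using measurable_space[OF Outp, of h] D by (intro nn_integral_regret_sum_ge) (auto simp: space_prob_algebra)
  qed (simp_all add: sets_R0 measurable_cong_sets[OF sets_R0 refl])
  also have "\<dots> = ennreal (expected_regret (y_base, no_noise) K Outp n)
      + ennreal (expected_regret (y_bump D, no_noise) K Outp n)"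
    unfolding R0_def
    by (simp add: expected_regret_y_base(1)[OF adm \<open>1 \<le> n\<close> measurable_no_noise]
        expected_regret_y_bump(1)[OF adm \<open>1 \<le> n\<close> measurable_no_noise D])
  finally show ?thesis
    using Mt_pos expected_regret_y_base(2)[OF adm \<open>1 \<le> n\<close> measurable_no_noise]
      expected_regret_y_bump(2)[OF adm \<open>1 \<le> n\<close> measurable_no_noise D]
    by (simp add: R0_def[symmetric] R0.emeasure_eq_measure flip: ennreal_plus ennreal_mult)
qed

lemma noiseless_lower_bound:
  fixes K :: "nat \<Rightarrow> nat \<Rightarrow> 'd hist \<Rightarrow> (real^'d) measure"
  assumes adm: "admissible K Outp" and "1 \<le> n"
  shows "\<exists>D. (1/2) ^ (2 * n) \<le> D \<and> D \<le> 1 \<and>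
    Mt * D powr \<alpha> / 2 \<le> expected_regret (y_base, no_noise) K Outp n + expected_regret (y_bump D, no_noise) K Outp n"
proof -
  obtain j where "j < 2 * n" and avoid: "1/2 \<le> measure (cso_run y_base no_noise (K n) n)
      (avoiding {x::real^'d. y_bump ((1/2) ^ Suc j) x \<noteq> y_base x} n)"
    using exists_rarely_visited_bump admissibleD[OF adm \<open>1 \<le> n\<close>] \<open>1 \<le> n\<close> by blast
  define D :: real where "D = (1/2) ^ Suc j"
  have "D \<le> 1"
    unfolding D_def by (rule power_le_one) auto
  moreover have "(1/2) ^ (2 * n) \<le> D"
    unfolding D_def using \<open>j < 2 * n\<close> by (intro power_decreasing) auto
  moreover have "0 < D"
    unfolding D_def by simp
  moreover have "Mt * D powr \<alpha> / 2 \<le> Mt * D powr \<alpha> * measure (cso_run y_base no_noise (K n) n)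
      (avoiding {x::real^'d. y_bump D x \<noteq> y_base x} n)"
    using avoid Mt_pos unfolding D_def by (simp add: mult_left_mono)
  ultimately show ?thesis
    using coupled_regret_bound[OF adm \<open>1 \<le> n\<close>] by fastforce
qed

lemma le_cam_lower_bound:
  fixes K :: "nat \<Rightarrow> nat \<Rightarrow> 'd hist \<Rightarrow> (real^'d) measure"
    and N0 N1 :: "real^'d \<Rightarrow> real measure" and l :: "(real^'d) \<times> real \<Rightarrow> ennreal"
  assumes adm: "admissible K Outp" and "1 \<le> n" and D: "0 < D" "D \<le> 1"
    and N0: "N0 \<in> borel \<rightarrow>\<^sub>M prob_algebra borel" and N1: "N1 \<in> borel \<rightarrow>\<^sub>M prob_algebra borel"
    and l [measurable]: "l \<in> borel_measurable borel"
    and change: "\<And>x g. g \<in> borel_measurable borel \<Longrightarrow>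
      (\<integral>\<^sup>+e. g (y_base x + e) \<partial>N0 x) = (\<integral>\<^sup>+e. l (x, y_bump D x + e) * g (y_bump D x + e) \<partial>N1 x)"
    and second_moment: "\<And>x. (\<integral>\<^sup>+e. (l (x, y_bump D x + e))\<^sup>2 \<partial>N1 x) \<le> ennreal (1 + 4 / (15 * real n))"
  shows "Mt * D powr \<alpha> / 4 \<le> expected_regret (y_base, N0) K Outp n + expected_regret (y_bump D, N1) K Outp n"
proof -
  interpret query_kernels n "K n" using admissibleD[OF adm \<open>1 \<le> n\<close>] by simp
  note Outp [measurable] = admissibleD(3)[OF adm \<open>1 \<le> n\<close>]
  note run_facts = borel_measurable_y_base borel_measurable_y_bump N0 N1 l
  define R1 where "R1 = cso_run (y_bump D) N1 (K n) n"
  define L where "L = likelihood l n"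
  define r0 where "r0 = expected_regret (y_base, N0) K Outp n"
  define r1 where "r1 = expected_regret (y_bump D, N1) K Outp n"
  have sets_R1: "sets R1 = sets hist_space"
    unfolding R1_def by (rule sets_cso_run) (auto simp: N1)
  have "4 * ennreal (Mt * D powr \<alpha>)
      \<le> 4 * ((\<integral>\<^sup>+h. L h * (\<integral>\<^sup>+x. simple_regret y_base x \<partial>Outp n h) \<partial>R1)
        + (\<integral>\<^sup>+h. \<integral>\<^sup>+x. simple_regret (y_bump D) x \<partial>Outp n h \<partial>R1))
      + ennreal (Mt * D powr \<alpha>) * (\<integral>\<^sup>+h. (L h)\<^sup>2 \<partial>R1)"
  proof (rule nn_integral_le_cam)
    show "(\<integral>\<^sup>+h. L h \<partial>R1) = 1"
      unfolding R1_def L_def by (rule nn_integral_likelihood_eq_1[OF run_facts change])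
    show "ennreal (Mt * D powr \<alpha>)
        \<le> (\<integral>\<^sup>+x. simple_regret y_base x \<partial>Outp n h) + (\<integral>\<^sup>+x. simple_regret (y_bump D) x \<partial>Outp n h)" for h
      using measurable_space[OF Outp, of h] D by (intro nn_integral_regret_sum_ge) (auto simp: space_prob_algebra)
  qed (simp_all add: L_def measurable_cong_sets[OF sets_R1 refl])
  also have "(\<integral>\<^sup>+h. L h * (\<integral>\<^sup>+x. simple_regret y_base x \<partial>Outp n h) \<partial>R1) = ennreal r0"
    unfolding r0_def expected_regret_y_base(1)[OF adm \<open>1 \<le> n\<close> N0] R1_def L_def
    using nn_integral_cso_run_likelihood[OF run_facts change order.refl
        measurable_nn_integral_simple_regret[OF Outp borel_measurable_y_base]]
    by simp
  also have "(\<integral>\<^sup>+h. \<integral>\<^sup>+x. simple_regret (y_bump D) x \<partial>Outp n h \<partial>R1) = ennreal r1"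
    unfolding r1_def R1_def by (rule expected_regret_y_bump(1)[OF adm \<open>1 \<le> n\<close> N1 D, symmetric])
  also have "(\<integral>\<^sup>+h. (L h)\<^sup>2 \<partial>R1) \<le> 3"
    unfolding R1_def L_def
    by (rule nn_integral_likelihood_square_le_3[OF borel_measurable_y_bump N1 l second_moment \<open>1 \<le> n\<close>])
  finally have "ennreal (4 * (Mt * D powr \<alpha>)) \<le> ennreal (4 * (r0 + r1) + Mt * D powr \<alpha> * 3)"
    using Mt_pos expected_regret_y_base(2)[OF adm \<open>1 \<le> n\<close> N0] expected_regret_y_bump(2)[OF adm \<open>1 \<le> n\<close> N1 D]
    by (simp add: r0_def r1_def ennreal_plus ennreal_mult mult_left_mono)
  then show ?thesis
    using Mt_pos expected_regret_y_base(2)[OF adm \<open>1 \<le> n\<close> N0] expected_regret_y_bump(2)[OF adm \<open>1 \<le> n\<close> N1 D]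
    by (subst (asm) ennreal_le_iff) (auto simp: r0_def r1_def)
qed

lemma noisy_lower_bound:
  fixes K :: "nat \<Rightarrow> nat \<Rightarrow> 'd hist \<Rightarrow> (real^'d) measure"
  assumes adm: "admissible K Outp" and "1 \<le> n" and "0 < \<sigma>"
    and \<sigma>_le: "\<sigma> \<le> 4 * 4 powr \<alpha> * Mt * sqrt n"
  shows "\<exists>P0\<in>cso_class \<alpha> M Mt \<sigma>. \<exists>P1\<in>cso_class \<alpha> M Mt \<sigma>.
    \<sigma> / (16 * 4 powr \<alpha> * sqrt n) \<le> expected_regret P0 K Outp n + expected_regret P1 K Outp n"
proof -
  define c where "c = \<sigma> / (4 * 4 powr \<alpha> * Mt * sqrt n)"
  define D where "D = c powr (1 / \<alpha>)"
  have "0 < c" "c \<le> 1"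
    unfolding c_def using \<open>0 < \<sigma>\<close> \<open>1 \<le> n\<close> \<sigma>_le Mt_pos by (auto simp: field_simps)
  then have D: "0 < D" "D \<le> 1" and D_powr: "D powr \<alpha> = c"
    unfolding D_def using alpha_pos by (auto simp: powr_powr powr_le1)
  have "2 * 4 powr \<alpha> * Mt * D powr \<alpha> = \<sigma> / (2 * sqrt n)"
    unfolding D_powr c_def using Mt_pos by (simp add: field_simps)
  then have gap: "0 \<le> y_bump D x - y_base x" "y_bump D x - y_base x \<le> \<sigma> / (2 * sqrt n)" for x :: "real^'d"
    using y_base_le_y_bump[OF D, of x] y_bump_minus_y_base_le[OF D, of x] by auto
  obtain N0 N1 :: "real^'d \<Rightarrow> real measure" and l :: "(real^'d) \<times> real \<Rightarrow> ennreal"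
    where N: "N0 \<in> borel \<rightarrow>\<^sub>M prob_algebra borel" "N1 \<in> borel \<rightarrow>\<^sub>M prob_algebra borel"
      and mgf: "\<And>x lam. (\<integral>\<^sup>+e. ennreal (exp (lam * e)) \<partial>N0 x) \<le> ennreal (exp (lam\<^sup>2 * \<sigma>\<^sup>2 / 2))"
        "\<And>x lam. (\<integral>\<^sup>+e. ennreal (exp (lam * e)) \<partial>N1 x) \<le> ennreal (exp (lam\<^sup>2 * \<sigma>\<^sup>2 / 2))"
      and likelihood: "l \<in> borel_measurable borel"
        "\<And>x g. g \<in> borel_measurable borel \<Longrightarrow>
          (\<integral>\<^sup>+e. g (y_base x + e) \<partial>N0 x) = (\<integral>\<^sup>+e. l (x, y_bump D x + e) * g (y_bump D x + e) \<partial>N1 x)"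
        "\<And>x. (\<integral>\<^sup>+e. (l (x, y_bump D x + e))\<^sup>2 \<partial>N1 x) \<le> ennreal (1 + 4 / (15 * real n))"
    using two_point_noise_pair[OF borel_measurable_y_base borel_measurable_y_bump \<open>0 < \<sigma>\<close> \<open>1 \<le> n\<close> gap]
    by (auto simp only:)
  have "Mt * D powr \<alpha> / 4 = \<sigma> / (16 * 4 powr \<alpha> * sqrt n)"
    unfolding D_powr c_def using Mt_pos by (simp add: field_simps)
  then have "\<sigma> / (16 * 4 powr \<alpha> * sqrt n)
      \<le> expected_regret (y_base, N0) K Outp n + expected_regret (y_bump D, N1) K Outp n"
    using le_cam_lower_bound[OF adm \<open>1 \<le> n\<close> D N likelihood] by (simp only:)
  then show ?thesis
    using y_base_in_class[OF N(1) mgf(1)] y_bump_in_class[OF D N(2) mgf(2)] by blast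
qed

end

context cso_instances
begin

lemma expected_regret_le_SUP:
  fixes K :: "nat \<Rightarrow> nat \<Rightarrow> 'd hist \<Rightarrow> (real^'d) measure"
  assumes "admissible K Outp" "1 \<le> n" "P \<in> cso_class \<alpha> M Mt \<sigma>"
  shows "expected_regret P K Outp n \<le> (SUP P\<in>cso_class \<alpha> M Mt \<sigma>. expected_regret P K Outp n)"
proof (rule cSUP_upper[OF assms(3)])
  show "bdd_above ((\<lambda>P. expected_regret P K Outp n) ` cso_class \<alpha> M Mt \<sigma>)"
    using expected_regret_le_M[OF assms(1,2) _ alpha_pos M_pos] by (intro bdd_aboveI2)
qed

lemma SUP_expected_regret_ge_exp:
  fixes K :: "nat \<Rightarrow> nat \<Rightarrow> 'd hist \<Rightarrow> (real^'d) measure"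
  assumes adm: "admissible K Outp" and "1 \<le> n"
  shows "Mt / 4 * exp (- (2 * \<alpha> * ln 2) * real n) \<le> (SUP P\<in>cso_class \<alpha> M Mt \<sigma>. expected_regret P K Outp n)"
proof -
  obtain D where D: "(1/2) ^ (2 * n) \<le> D" "D \<le> 1" and sum:
    "Mt * D powr \<alpha> / 2 \<le> expected_regret (y_base, no_noise) K Outp n + expected_regret (y_bump D, no_noise) K Outp n"
    using noiseless_lower_bound[OF adm \<open>1 \<le> n\<close>] by blast
  have "0 < D" using D(1) zero_less_power[of "1/2::real" "2 * n"] by linarith
  have "exp (- (2 * \<alpha> * ln 2) * real n) = ((1/2) ^ (2 * n)) powr \<alpha>"
    by (simp add: powr_def ln_realpow ln_div algebra_simps)
  also have "\<dots> \<le> D powr \<alpha>"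
    using D(1) alpha_pos by (intro powr_mono2) auto
  finally have "Mt / 4 * exp (- (2 * \<alpha> * ln 2) * real n) \<le> Mt / 4 * D powr \<alpha>"
    using Mt_pos by (intro mult_left_mono) auto
  also have "\<dots> \<le> (SUP P\<in>cso_class \<alpha> M Mt \<sigma>. expected_regret P K Outp n)"
  proof -
    have "(y_base, no_noise) \<in> cso_class \<alpha> M Mt \<sigma>" "(y_bump D, no_noise) \<in> cso_class \<alpha> M Mt \<sigma>"
      by (rule y_base_in_class[OF measurable_no_noise no_noise_mgf_le],
          rule y_bump_in_class[OF \<open>0 < D\<close> \<open>D \<le> 1\<close> measurable_no_noise no_noise_mgf_le])
    from this[THEN expected_regret_le_SUP[OF adm \<open>1 \<le> n\<close>]] show ?thesis
      using sum by linarith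
  qed
  finally show ?thesis .
qed

lemma SUP_expected_regret_ge_sqrt:
  fixes K :: "nat \<Rightarrow> nat \<Rightarrow> 'd hist \<Rightarrow> (real^'d) measure"
  assumes adm: "admissible K Outp" and "1 \<le> n" and "0 \<le> \<sigma>"
    and n_ge: "1 / (4 * 4 powr \<alpha> * Mt)\<^sup>2 * \<sigma>\<^sup>2 \<le> real n"
  shows "1 / (32 * 4 powr \<alpha>) * sqrt (\<sigma>\<^sup>2 / real n) \<le> (SUP P\<in>cso_class \<alpha> M Mt \<sigma>. expected_regret P K Outp n)"
    (is "_ \<le> ?S")
proof (cases "\<sigma> = 0")
  case True
  have "0 \<le> Mt / 4 * exp (- (2 * \<alpha> * ln 2) * real n)"
    using Mt_pos by simp
  then show ?thesis
    using SUP_expected_regret_ge_exp[OF adm \<open>1 \<le> n\<close>, of \<sigma>] True by simp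
next
  case False
  define C where "C = 4 * 4 powr \<alpha> * Mt"
  have "0 < C" unfolding C_def using Mt_pos by simp
  have "\<sigma>\<^sup>2 = C\<^sup>2 * (1 / C\<^sup>2 * \<sigma>\<^sup>2)"
    using \<open>0 < C\<close> by simp
  also have "\<dots> \<le> C\<^sup>2 * real n"
    using n_ge unfolding C_def[symmetric] by (intro mult_left_mono) auto
  also have "\<dots> = (C * sqrt n)\<^sup>2"
    by (simp add: power_mult_distrib)
  finally have "\<sigma>\<^sup>2 \<le> (C * sqrt n)\<^sup>2" .
  moreover have "0 \<le> C * sqrt n"
    using \<open>0 < C\<close> by simp
  ultimately have "\<sigma> \<le> C * sqrt n"
    by (rule power2_le_imp_le)
  moreover have "0 < \<sigma>"
    using False \<open>0 \<le> \<sigma>\<close> by simp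
  ultimately obtain P0 P1 where P: "P0 \<in> cso_class \<alpha> M Mt \<sigma>" "P1 \<in> cso_class \<alpha> M Mt \<sigma>"
    and "\<sigma> / (16 * 4 powr \<alpha> * sqrt n) \<le> expected_regret P0 K Outp n + expected_regret P1 K Outp n"
    using noisy_lower_bound[OF adm \<open>1 \<le> n\<close>] unfolding C_def by blast
  then have "\<sigma> / (16 * 4 powr \<alpha> * sqrt n) \<le> 2 * ?S"
    using expected_regret_le_SUP[OF adm \<open>1 \<le> n\<close> P(1)] expected_regret_le_SUP[OF adm \<open>1 \<le> n\<close> P(2)]
    by linarith
  moreover have "sqrt (\<sigma>\<^sup>2 / real n) = \<sigma> / sqrt n"
    using \<open>0 \<le> \<sigma>\<close> by (simp add: real_sqrt_divide)
  ultimately show ?thesis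
    by (simp add: field_simps)
qed

lemma SUP_expected_regret_ge:
  fixes K :: "nat \<Rightarrow> nat \<Rightarrow> 'd hist \<Rightarrow> (real^'d) measure"
  assumes "admissible K Outp" and "1 \<le> n" and "0 \<le> \<sigma>"
    and "1 / (4 * 4 powr \<alpha> * Mt)\<^sup>2 * \<sigma>\<^sup>2 \<le> real n"
  shows "min (Mt / 4) (1 / (32 * 4 powr \<alpha>)) * max (sqrt (\<sigma>\<^sup>2 / real n)) (exp (- (2 * \<alpha> * ln 2) * real n))
    \<le> (SUP P\<in>cso_class \<alpha> M Mt \<sigma>. expected_regret P K Outp n)"
    (is "?b6 * max ?noisy ?noiseless \<le> ?S")
proof -
  have "?b6 * ?noiseless \<le> Mt / 4 * ?noiseless" "?b6 * ?noisy \<le> 1 / (32 * 4 powr \<alpha>) * ?noisy"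
    by (intro mult_right_mono; simp)+
  then have "?b6 * ?noiseless \<le> ?S" "?b6 * ?noisy \<le> ?S"
    using SUP_expected_regret_ge_exp[OF assms(1,2), of \<sigma>] SUP_expected_regret_ge_sqrt[OF assms] by linarith+
  moreover have "0 \<le> ?b6" using Mt_pos by simp
  ultimately show ?thesis
    by (simp add: max_mult_distrib_left)
qed

end

theorem theorem2:
  fixes \<alpha> M Mt :: real
    and K :: "nat \<Rightarrow> nat \<Rightarrow> (nat \<Rightarrow> ((real^'d) \<times> real)) \<Rightarrow> (real^'d) measure"
    and Outp :: "nat \<Rightarrow> (nat \<Rightarrow> ((real^'d) \<times> real)) \<Rightarrow> (real^'d) measure"
  assumes "\<alpha> > 0" and "M > 0" and "Mt > 0"
    and "M / (2 powr (4 * \<alpha> + 1) * Mt) \<ge> 1"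
    and "M / Mt \<ge> inverse (1 - 5 powr (- \<alpha>)) * (1 + 1 / (5 powr \<alpha> - 3 powr \<alpha>)) * 80 powr \<alpha>"
    and "admissible K Outp"
  shows "\<exists>b1 b3 b5 b6. b1 > 0 \<and> b3 > 0 \<and> b5 > 0 \<and> b6 > 0 \<and>
    (\<forall>\<sigma>::real. \<forall>n::nat. \<sigma> \<ge> 0 \<and> real n \<ge> max (b1 * \<sigma>\<^sup>2) b3 \<longrightarrow>
       (SUP P\<in>cso_class \<alpha> M Mt \<sigma>. expected_regret P K Outp n)
         \<ge> b6 * max (sqrt (\<sigma>\<^sup>2 / real n)) (exp (- b5 * real n)))"
proof -
  have "2 powr (4 * \<alpha> + 1) * Mt \<le> M"
    using assms(3,4) by (simp add: le_divide_eq)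
  then interpret cso_instances \<alpha> Mt M
    using assms(1,3) by unfold_locales
  show ?thesis
  proof (rule exI[of _ "1 / (4 * 4 powr \<alpha> * Mt)\<^sup>2"], rule exI[of _ 1], rule exI[of _ "2 * \<alpha> * ln 2"],
      rule exI[of _ "min (Mt / 4) (1 / (32 * 4 powr \<alpha>))"], intro conjI allI impI)
    fix \<sigma> :: real and n :: nat
    assume "0 \<le> \<sigma> \<and> max (1 / (4 * 4 powr \<alpha> * Mt)\<^sup>2 * \<sigma>\<^sup>2) 1 \<le> real n"
    then show "min (Mt / 4) (1 / (32 * 4 powr \<alpha>)) * max (sqrt (\<sigma>\<^sup>2 / real n)) (exp (- (2 * \<alpha> * ln 2) * real n))
        \<le> (SUP P\<in>cso_class \<alpha> M Mt \<sigma>. expected_regret P K Outp n)"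
      using assms(6) by (intro SUP_expected_regret_ge) auto
  qed (use assms(1,3) in auto)
qed

end
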